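(* In the setting described in the context, for every $t\in\mathbb{Z}_+$, $k\in[t]$ and $\delta\in(0,1)$, $$\mathbb{P}\big(\psi(t,k,\delta)\le\widehat\psi(t,k,\delta)\big)\ge 1-\delta\quad\text{and}\quad \mathbb{P}\big(\widehat\psi(t,k,\delta)\le \psi(t,k,\delta)+\xi(t,k,\delta)\big)\ge 1-\delta,$$ where $$\xi(t,k,\delta)=\begin{cases}0, & B_{t,k}=1,\\ \sqrt{\frac{4\log(2/\delta)}{B_{t,k}}}\max_{t-k+1\le j\le t}|\mu_j-\mu_t|+\frac{13(b-a)\log(2/\delta)}{3(B_{t,k}-1)}, & B_{t,k}\ge 2.\end{cases}$$
   Context: Let $a<b$ be real numbers, $M=b-a$, and $t\in\mathbb{Z}_+$. For each $j\in[t]$ let $\mathcal{Q}_j$ be a probability distribution on $[a,b]$ with mean $\mu_j$ and variance $\sigma_j^2$, and let $B_j\ge 1$ be an integer. The data are $\mathcal{D}_j=\{u_{j,i}\}_{i=1}^{B_j}$, $j\in[t]$, where all $u_{j,i}$ are mutually independent and $u_{j,i}\sim\mathcal{Q}_j$. For $k\in[t]$ define $B_{t,k}=\sum_{j=t-k+1}^t B_j$, $\sigma_{t,k}^2=\frac{1}{B_{t,k}}\sum_{j=t-k+1}^t B_j\sigma_j^2$, $\widehat{\mu}_{t,k}=\frac{1}{B_{t,k}}\sum_{j=t-k+1}^t\sum_{i=1}^{B_j}u_{j,i}$, and when $B_{t,k}\ge2$ the sample variance $\widehat v_{t,k}^2=\frac{1}{B_{t,k}-1}\sum_{j=t-k+1}^t\sum_{i=1}^{B_j}(u_{j,i}-\widehat\mu_{t,k})^2$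 (with $\widehat v_{t,k}\ge 0$). For $\delta\in(0,1)$ define $$\psi(t,k,\delta)=\begin{cases} M, & B_{t,k}=1,\\ \sigma_{t,k}\sqrt{\frac{2\log(2/\delta)}{B_{t,k}}}+\frac{2M\log(2/\delta)}{3B_{t,k}}, & B_{t,k}\ge 2,\end{cases}\qquad \widehat\psi(t,k,\delta)=\begin{cases} M, & B_{t,k}=1,\\ \widehat v_{t,k}\sqrt{\frac{2\log(2/\delta)}{B_{t,k}}}+\frac{8M\log(2/\delta)}{3(B_{t,k}-1)}, & B_{t,k}\ge 2.\end{cases}$$ *)

theory Defs
  imports "HOL-Probability.Probability"
begin

definition dmean :: "real measure \<Rightarrow> real" where
  "dmean Q = (\<integral>x. x \<partial>Q)"

definition dvar :: "real measure \<Rightarrow> real" where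
  "dvar Q = (\<integral>x. (x - dmean Q)^2 \<partial>Q)"

definition Btk :: "(nat \<Rightarrow> nat) \<Rightarrow> nat \<Rightarrow> nat \<Rightarrow> nat" where
  "Btk B t k = (\<Sum>j\<in>{t-k+1..t}. B j)"

definition sigma2tk :: "(nat \<Rightarrow> real measure) \<Rightarrow> (nat \<Rightarrow> nat) \<Rightarrow> nat \<Rightarrow> nat \<Rightarrow> real" where
  "sigma2tk Q B t k = (\<Sum>j\<in>{t-k+1..t}. real (B j) * dvar (Q j)) / real (Btk B t k)"

definition muhat :: "(nat \<Rightarrow> nat \<Rightarrow> 'a \<Rightarrow> real) \<Rightarrow> (nat \<Rightarrow> nat) \<Rightarrow> nat \<Rightarrow> nat \<Rightarrow> 'a \<Rightarrow> real" where
  "muhat u B t k \<omega> = (\<Sum>j\<in>{t-k+1..t}. \<Sum>i\<in>{1..B j}. u j i \<omega>) / real (Btk B t k)"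

definition vhat :: "(nat \<Rightarrow> nat \<Rightarrow> 'a \<Rightarrow> real) \<Rightarrow> (nat \<Rightarrow> nat) \<Rightarrow> nat \<Rightarrow> nat \<Rightarrow> 'a \<Rightarrow> real" where
  "vhat u B t k \<omega> = sqrt ((\<Sum>j\<in>{t-k+1..t}. \<Sum>i\<in>{1..B j}. (u j i \<omega> - muhat u B t k \<omega>)^2)
                          / (real (Btk B t k) - 1))"

definition psi :: "real \<Rightarrow> (nat \<Rightarrow> real measure) \<Rightarrow> (nat \<Rightarrow> nat) \<Rightarrow> nat \<Rightarrow> nat \<Rightarrow> real \<Rightarrow> real" where
  "psi M Q B t k \<delta> =
     (if Btk B t k = 1 then M
      else sqrt (sigma2tk Q B t k) * sqrt (2 * ln (2 / \<delta>) / real (Btk B t k))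
           + 2 * M * ln (2 / \<delta>) / (3 * real (Btk B t k)))"

definition psihat :: "real \<Rightarrow> (nat \<Rightarrow> nat \<Rightarrow> 'a \<Rightarrow> real) \<Rightarrow> (nat \<Rightarrow> nat) \<Rightarrow> nat \<Rightarrow> nat \<Rightarrow> real \<Rightarrow> 'a \<Rightarrow> real" where
  "psihat M u B t k \<delta> \<omega> =
     (if Btk B t k = 1 then M
      else vhat u B t k \<omega> * sqrt (2 * ln (2 / \<delta>) / real (Btk B t k))
           + 8 * M * ln (2 / \<delta>) / (3 * (real (Btk B t k) - 1)))"

definition xi :: "real \<Rightarrow> (nat \<Rightarrow> real measure) \<Rightarrow> (nat \<Rightarrow> nat) \<Rightarrow> nat \<Rightarrow> nat \<Rightarrow> real \<Rightarrow> real" where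
  "xi M Q B t k \<delta> =
     (if Btk B t k = 1 then 0
      else sqrt (4 * ln (2 / \<delta>) / real (Btk B t k))
             * Max ((\<lambda>j. \<bar>dmean (Q j) - dmean (Q t)\<bar>) ` {t-k+1..t})
           + 13 * M * ln (2 / \<delta>) / (3 * (real (Btk B t k) - 1)))"

end

theory Submission
  imports Defs
begin

text \<open>
  For \<open>n\<close> pooled observations the sample variance is the U-statistic with kernel
  \<open>(y\<^sub>i - y\<^sub>j)\<^sup>2 / 2\<close>.  Following Hoeffding, it is an average over all permutations of
  means of \<open>\<lfloor>n/2\<rfloor>\<close> kernels evaluated on disjoint, hence independent, pairs; by Jensen's
  inequality its moment generating function is therefore dominated by that of a sum of
  \<open>\<lfloor>n/2\<rfloor>\<close> independent variables with values in \<open>[0, M\<^sup>2/2]\<close>.  The expectation of the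
  kernel on a pair \<open>(i, j)\<close> is \<open>(\<sigma>\<^sub>i\<^sup>2 + \<sigma>\<^sub>j\<^sup>2 + (\<mu>\<^sub>i - \<mu>\<^sub>j)\<^sup>2) / 2\<close>, so exponential
  moment bounds for bounded nonnegative variables and Chernoff's method give Bernstein-type
  tails for the sample variance around the pooled variance \<open>\<sigma>\<^sup>2\<close>, inflated in the upper
  tail by the drift of the means.  Choosing the Chernoff parameter turns these into
  deviation bounds for \<open>\<surd>(sample variance)\<close> of the stated size.
\<close>

section \<open>Averaging over permutations\<close>

lemma sum_permutations_transpose_first:
  fixes F :: "nat \<Rightarrow> nat \<Rightarrow> 'b::comm_monoid_add"
  assumes "a < n" "b < n" "a \<noteq> b" "c < n" "c \<noteq> b"
  shows "(\<Sum>p\<in>{p. p permutes {..<n}}. F (p a) (p b)) = (\<Sum>p\<in>{p. p permutes {..<n}}. F (p c) (p b))"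
proof -
  have q: "Transposition.transpose a c permutes {..<n}"
    using assms by (intro permutes_swap_id) auto
  have "(\<Sum>p\<in>{p. p permutes {..<n}}. F (p c) (p b)) =
        (\<Sum>p\<in>{p. p permutes {..<n}}. F ((p \<circ> Transposition.transpose a c) c)
                                       ((p \<circ> Transposition.transpose a c) b))"
    by (rule sum_permutations_compose_right[OF q])
  also have "\<dots> = (\<Sum>p\<in>{p. p permutes {..<n}}. F (p a) (p b))"
    using assms by (simp add: transpose_def)
  finally show ?thesis by simp
qed

lemma sum_permutations_pair_eq:
  fixes F :: "nat \<Rightarrow> nat \<Rightarrow> 'b::comm_monoid_add"
  assumes sym: "\<And>i j. F i j = F j i" and ab: "a < n" "b < n" "a \<noteq> b"
  shows "(\<Sum>p\<in>{p. p permutes {..<n}}. F (p a) (p b)) = (\<Sum>p\<in>{p. p permutes {..<n}}. F (p 0) (p 1))"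
proof -
  define G where "G a b = (\<Sum>p\<in>{p. p permutes {..<n}}. F (p a) (p b))" for a b
  have symG: "G x y = G y x" for x y unfolding G_def by (simp add: sym)
  have n: "2 \<le> n" using ab by auto
  have main: "G x y = G 0 1" if xy: "x < n" "y < n" "x \<noteq> y" "x \<noteq> 1" for x y
  proof -
    have "G x y = G y x" by (rule symG)
    also have "\<dots> = G 1 x" unfolding G_def using xy n by (intro sum_permutations_transpose_first) auto
    also have "\<dots> = G x 1" by (rule symG)
    also have "\<dots> = G 0 1" unfolding G_def using xy n by (intro sum_permutations_transpose_first) auto
    finally show ?thesis .
  qed
  show ?thesis
  proof (cases "a = 1")
    case True
    then have "G b a = G 0 1" using ab by (intro main) auto
    then show ?thesis using symG unfolding G_def by metis
  next
    case False
    then show ?thesis using main[of a b] ab unfolding G_def by auto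
  qed
qed

lemma sum_offdiag_const:
  "(\<Sum>i<n. \<Sum>j<n. if i = j then 0 else c) = real n * (real n - 1) * (c :: real)"
proof -
  have "(\<Sum>j<n. if i = j then 0 else c) = (real n - 1) * c" if "i < n" for i
    using that by (simp add: sum.If_cases Int_absorb1 card_Diff_singleton_if of_nat_diff
        flip: Diff_eq)
  then show ?thesis by simp
qed

lemma sum_offdiag_permutes:
  assumes "p permutes {..<n}"
  shows "(\<Sum>i<n. \<Sum>j<n. if i = j then 0 else F (p i) (p j)) = (\<Sum>i<n. \<Sum>j<n. if i = j then 0 else F i j)"
proof -
  have bij: "bij_betw p {..<n} {..<n}" using assms by (rule permutes_imp_bij)
  have "(\<Sum>i<n. \<Sum>j<n. if i = j then 0 else F (p i) (p j))
      = (\<Sum>i<n. \<Sum>j<n. (\<lambda>x y. if x = y then 0 else F x y) (p i) (p j))"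
    using bij_betw_imp_inj_on[OF bij] by (intro sum.cong refl) (auto simp: inj_on_def)
  also have "\<dots> = (\<Sum>i<n. \<Sum>j<n. (\<lambda>x y. if x = y then 0 else F x y) (p i) j)"
    by (intro sum.cong refl sum.reindex_bij_betw[OF bij])
  also have "\<dots> = (\<Sum>i<n. \<Sum>j<n. if i = j then 0 else F i j)"
    by (rule sum.reindex_bij_betw[OF bij, where g="\<lambda>x. \<Sum>j<n. (\<lambda>x y. if x = y then 0 else F x y) x j"])
  finally show ?thesis .
qed

text \<open>Every ordered pair of distinct indices is hit equally often by the consecutive pairs
  \<open>(p (2k), p (2k+1))\<close> as \<open>p\<close> ranges over all permutations.\<close>

lemma sum_permutations_consecutive_pairs:
  fixes F :: "nat \<Rightarrow> nat \<Rightarrow> real"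
  assumes sym: "\<And>i j. F i j = F j i" and n: "2 \<le> n"
  shows "(\<Sum>p\<in>{p. p permutes {..<n}}. \<Sum>k<n div 2. F (p (2*k)) (p (2*k+1)))
       = real (n div 2) * (fact n / (real n * (real n - 1))) * (\<Sum>i<n. \<Sum>j<n. if i = j then 0 else F i j)"
proof -
  define P where "P = {p. p permutes {..<n}}"
  define G where "G a b = (\<Sum>p\<in>P. F (p a) (p b))" for a b
  define S where "S = (\<Sum>i<n. \<Sum>j<n. if i = j then 0 else F i j)"
  have cardP: "card P = fact n" unfolding P_def by (intro card_permutations) auto
  have Gc: "G x y = G 0 1" if "x < n" "y < n" "x \<noteq> y" for x y
    unfolding G_def P_def using that by (intro sum_permutations_pair_eq sym)
  have "(\<Sum>p\<in>P. \<Sum>k<n div 2. F (p (2*k)) (p (2*k+1))) = (\<Sum>k<n div 2. G (2*k) (2*k+1))"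
    unfolding G_def by (rule sum.swap)
  also have "\<dots> = (\<Sum>k<n div 2. G 0 1)"
    by (intro sum.cong refl Gc) auto
  also have "\<dots> = real (n div 2) * G 0 1" by simp
  finally have L: "(\<Sum>p\<in>P. \<Sum>k<n div 2. F (p (2*k)) (p (2*k+1))) = real (n div 2) * G 0 1" .
  have "real n * (real n - 1) * G 0 1 = (\<Sum>i<n. \<Sum>j<n. if i = j then 0 else G i j)"
    unfolding sum_offdiag_const[symmetric] by (intro sum.cong refl) (simp, metis Gc One_nat_def)
  also have "\<dots> = (\<Sum>i<n. \<Sum>j<n. \<Sum>p\<in>P. if i = j then 0 else F (p i) (p j))"
    unfolding G_def by (intro sum.cong refl) auto
  also have "\<dots> = (\<Sum>p\<in>P. \<Sum>i<n. \<Sum>j<n. if i = j then 0 else F (p i) (p j))"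
    by (subst sum.swap, rule sum.cong[OF refl], rule sum.swap)
  also have "\<dots> = (\<Sum>p\<in>P. S)"
    unfolding S_def P_def by (rule sum.cong[OF refl]) (rule sum_offdiag_permutes, simp)
  also have "\<dots> = fact n * S" using cardP by simp
  finally have "real n * (real n - 1) * G 0 1 = fact n * S" .
  moreover have "real n * (real n - 1) > 0" using n by auto
  ultimately have "G 0 1 = fact n * S / (real n * (real n - 1))"
    by (metis nonzero_mult_div_cancel_left less_irrefl)
  then show ?thesis using L unfolding P_def S_def by simp
qed

lemma sum_consecutive_pairs:
  fixes g :: "nat \<Rightarrow> 'b::comm_monoid_add"
  shows "(\<Sum>k<m. g (2*k) + g (2*k+1)) = (\<Sum>r<2*m. g r)"
  by (induction m) (simp_all add: lessThan_Suc add_ac)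

lemma sum_half_sq_diff_eq:
  fixes y :: "nat \<Rightarrow> real" assumes n: "0 < n"
  shows "(\<Sum>i<n. \<Sum>j<n. if i = j then 0 else (y i - y j)\<^sup>2 / 2)
       = real n * (\<Sum>i<n. (y i - (\<Sum>j<n. y j) / real n)\<^sup>2)"
proof -
  define S1 where "S1 = (\<Sum>i<n. y i)"
  define S2 where "S2 = (\<Sum>i<n. (y i)\<^sup>2)"
  have "(\<Sum>i<n. \<Sum>j<n. if i = j then 0 else (y i - y j)\<^sup>2 / 2) = (\<Sum>i<n. \<Sum>j<n. (y i - y j)\<^sup>2 / 2)"
    by (intro sum.cong refl) auto
  also have "\<dots> = (\<Sum>i<n. \<Sum>j<n. (y i)\<^sup>2 / 2 - y i * y j + (y j)\<^sup>2 / 2)"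
    by (intro sum.cong refl) (simp add: power2_eq_square field_simps)
  also have "\<dots> = (\<Sum>i<n. real n * (y i)\<^sup>2 / 2 - y i * S1 + S2 / 2)"
    unfolding S1_def S2_def by (intro sum.cong refl) (simp add: sum.distrib sum_subtractf sum_distrib_left sum_divide_distrib)
  also have "\<dots> = real n * S2 / 2 - S1 * S1 + real n * S2 / 2"
  proof -
    have a: "(\<Sum>i<n. real n * (y i)\<^sup>2 / 2) = real n * S2 / 2" unfolding S2_def by (simp add: sum_distrib_left sum_divide_distrib)
    have b: "(\<Sum>i<n. y i * S1) = S1 * S1" unfolding S1_def by (simp add: sum_distrib_right)
    have c: "(\<Sum>i<n. S2 / 2) = real n * S2 / 2" by simp
    show ?thesis by (simp only: sum.distrib sum_subtractf a b c)
  qed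
  finally have A: "(\<Sum>i<n. \<Sum>j<n. if i = j then 0 else (y i - y j)\<^sup>2 / 2) = real n * S2 - S1 * S1" by simp
  have "(\<Sum>i<n. (y i - S1 / real n)\<^sup>2) = (\<Sum>i<n. (y i)\<^sup>2 - 2 * (S1 / real n) * y i + (S1 / real n)\<^sup>2)"
    by (intro sum.cong refl) (simp add: power2_eq_square algebra_simps)
  also have "\<dots> = S2 - 2 * (S1 / real n) * S1 + real n * (S1 / real n)\<^sup>2"
    unfolding S1_def S2_def by (simp add: sum.distrib sum_subtractf sum_distrib_left)
  also have "\<dots> = S2 - S1 * S1 / real n"
    using n by (simp add: power2_eq_square field_simps)
  finally have B: "(\<Sum>i<n. (y i - S1 / real n)\<^sup>2) = S2 - S1 * S1 / real n" .
  show ?thesis unfolding A using B n unfolding S1_def[symmetric] by (simp add: field_simps)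
qed

section \<open>Exponential moments of bounded variables\<close>

lemma sq_diff_le_sq_range:
  fixes x y a b :: real
  assumes "a \<le> x" "x \<le> b" "a \<le> y" "y \<le> b"
  shows "(x - y)\<^sup>2 \<le> (b - a)\<^sup>2"
proof -
  have "\<bar>x - y\<bar> \<le> \<bar>b - a\<bar>" using assms by linarith
  then show ?thesis by (simp add: abs_le_square_iff)
qed

lemma exp_neg_le_quadratic:
  fixes x :: real assumes x: "0 \<le> x"
  shows "exp (-x) \<le> 1 - x + x\<^sup>2 / 2"
proof -
  define g where "g x = 1 - x + x\<^sup>2 / 2 - exp (-x)" for x :: real
  have d: "(g has_real_derivative (-1 + y + exp (-y))) (at y)" for y
    unfolding g_def by (auto intro!: derivative_eq_intros simp: power2_eq_square)
  have "g 0 \<le> g x"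
  proof (rule DERIV_nonneg_imp_nondecreasing[OF x])
    fix y :: real
    have "1 - y \<le> exp (-y)" using exp_ge_add_one_self[of "-y"] by simp
    then show "\<exists>y'. (g has_real_derivative y') (at y) \<and> 0 \<le> y'"
      using d[of y] by (intro exI[of _ "-1 + y + exp (-y)"]) auto
  qed
  then show ?thesis unfolding g_def by simp
qed

context prob_space
begin

lemma integrable_of_AE_bounded:
  fixes X :: "'a \<Rightarrow> real"
  assumes [measurable]: "X \<in> borel_measurable M" and bnd: "AE \<omega> in M. a \<le> X \<omega> \<and> X \<omega> \<le> b"
  shows "integrable M X" and "integrable M (\<lambda>\<omega>. (X \<omega> - c)\<^sup>2)"
proof -
  have "AE \<omega> in M. norm (X \<omega>) \<le> \<bar>a\<bar> + \<bar>b\<bar>"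
    using bnd by (rule eventually_mono) auto
  then show "integrable M X" by (rule integrable_const_bound) simp
  have sq_le: "norm ((X \<omega> - c)\<^sup>2) \<le> (\<bar>a\<bar> + \<bar>b\<bar> + \<bar>c\<bar>)\<^sup>2" if "a \<le> X \<omega> \<and> X \<omega> \<le> b" for \<omega>
    using that power_mono[of "\<bar>X \<omega> - c\<bar>" "\<bar>a\<bar> + \<bar>b\<bar> + \<bar>c\<bar>" 2] by auto
  have "AE \<omega> in M. norm ((X \<omega> - c)\<^sup>2) \<le> (\<bar>a\<bar> + \<bar>b\<bar> + \<bar>c\<bar>)\<^sup>2"
    using bnd by (rule eventually_mono) (rule sq_le)
  then show "integrable M (\<lambda>\<omega>. (X \<omega> - c)\<^sup>2)" by (rule integrable_const_bound) simp
qed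

lemma integrable_exp_of_AE_bounded:
  fixes f :: "'a \<Rightarrow> real"
  assumes [measurable]: "f \<in> borel_measurable M" and fb: "AE x in M. 0 \<le> f x \<and> f x \<le> D"
  shows "integrable M (\<lambda>x. exp (c * f x))"
proof (rule integrable_const_bound[where B="exp (\<bar>c\<bar> * D)"])
  have bound: "c * f x \<le> \<bar>c\<bar> * D" if "0 \<le> f x \<and> f x \<le> D" for x
    using that by (metis abs_ge_self abs_mult abs_of_nonneg mult_mono' order.trans abs_ge_zero)
  show "AE x in M. norm (exp (c * f x)) \<le> exp (\<bar>c\<bar> * D)"
    using fb by (rule eventually_mono) (simp add: bound)
qed measurable

lemma mgf_le_of_nonneg_bounded:
  fixes Z :: "'a \<Rightarrow> real"
  assumes Zm: "Z \<in> borel_measurable M" and Zb: "AE x in M. 0 \<le> Z x \<and> Z x \<le> K"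
    and s: "0 \<le> s" "s * K \<le> 1"
  shows "expectation (\<lambda>x. exp (s * Z x)) \<le> exp ((s + s\<^sup>2 * K) * expectation Z)"
proof -
  have intZ: "integrable M Z" by (rule integrable_of_AE_bounded(1)[OF Zm Zb])
  have "expectation (\<lambda>x. exp (s * Z x)) \<le> expectation (\<lambda>x. 1 + (s + s\<^sup>2 * K) * Z x)"
  proof (rule integral_mono_AE[OF integrable_exp_of_AE_bounded[OF Zm Zb]])
    show "integrable M (\<lambda>x. 1 + (s + s\<^sup>2 * K) * Z x)" using intZ by auto
    show "AE x in M. exp (s * Z x) \<le> 1 + (s + s\<^sup>2 * K) * Z x"
      using Zb
    proof (rule eventually_mono)
      fix x assume z: "0 \<le> Z x \<and> Z x \<le> K"
      have sz: "0 \<le> s * Z x" "s * Z x \<le> 1" using z s mult_left_mono[of "Z x" K s] by auto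
      have "exp (s * Z x) \<le> 1 + s * Z x + (s * Z x)\<^sup>2" by (rule exp_bound[OF sz])
      also have "(s * Z x)\<^sup>2 = s\<^sup>2 * (Z x * Z x)" by (simp add: power2_eq_square)
      also have "\<dots> \<le> s\<^sup>2 * (K * Z x)" using z by (intro mult_left_mono mult_right_mono) auto
      finally show "exp (s * Z x) \<le> 1 + (s + s\<^sup>2 * K) * Z x" by (simp add: algebra_simps)
    qed
  qed
  also have "\<dots> = 1 + (s + s\<^sup>2 * K) * expectation Z" using intZ by (simp add: prob_space)
  also have "\<dots> \<le> exp ((s + s\<^sup>2 * K) * expectation Z)" by (rule exp_ge_add_one_self[THEN order.trans[rotated]]) simp
  finally show ?thesis .
qed

lemma mgf_neg_le_of_nonneg_bounded:
  fixes Z :: "'a \<Rightarrow> real"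
  assumes Zm: "Z \<in> borel_measurable M" and Zb: "AE x in M. 0 \<le> Z x \<and> Z x \<le> K"
    and s: "0 \<le> s"
  shows "expectation (\<lambda>x. exp (- s * Z x)) \<le> exp (- (s - s\<^sup>2 * K / 2) * expectation Z)"
proof -
  have intZ: "integrable M Z" by (rule integrable_of_AE_bounded(1)[OF Zm Zb])
  have "expectation (\<lambda>x. exp (- s * Z x)) \<le> expectation (\<lambda>x. 1 - (s - s\<^sup>2 * K / 2) * Z x)"
  proof (rule integral_mono_AE[OF integrable_exp_of_AE_bounded[OF Zm Zb]])
    show "integrable M (\<lambda>x. 1 - (s - s\<^sup>2 * K / 2) * Z x)" using intZ by auto
    show "AE x in M. exp (- s * Z x) \<le> 1 - (s - s\<^sup>2 * K / 2) * Z x"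
      using Zb
    proof (rule eventually_mono)
      fix x assume z: "0 \<le> Z x \<and> Z x \<le> K"
      have sz: "0 \<le> s * Z x" using z s by auto
      have "exp (- s * Z x) \<le> 1 - s * Z x + (s * Z x)\<^sup>2 / 2" using exp_neg_le_quadratic[OF sz] by simp
      also have "(s * Z x)\<^sup>2 = s\<^sup>2 * (Z x * Z x)" by (simp add: power2_eq_square)
      also have "\<dots> \<le> s\<^sup>2 * (K * Z x)" using z by (intro mult_left_mono mult_right_mono) auto
      finally show "exp (- s * Z x) \<le> 1 - (s - s\<^sup>2 * K / 2) * Z x" by (simp add: algebra_simps)
    qed
  qed
  also have "\<dots> = 1 - (s - s\<^sup>2 * K / 2) * expectation Z" using intZ by (simp add: prob_space)
  also have "\<dots> \<le> exp (- (s - s\<^sup>2 * K / 2) * expectation Z)"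
    using exp_ge_add_one_self[of "- (s - s\<^sup>2 * K / 2) * expectation Z"] by linarith
  finally show ?thesis .
qed

lemma chernoff_prob_ge:
  fixes X :: "'a \<Rightarrow> real"
  assumes [measurable]: "X \<in> borel_measurable M"
    and int: "integrable M (\<lambda>\<omega>. exp (l * X \<omega>))" and l: "0 \<le> l"
  shows "prob {\<omega>\<in>space M. T \<le> X \<omega>} \<le> expectation (\<lambda>\<omega>. exp (l * X \<omega>)) / exp (l * T)"
proof -
  have "prob {\<omega>\<in>space M. T \<le> X \<omega>} \<le> prob {\<omega>\<in>space M. exp (l * T) \<le> exp (l * X \<omega>)}"
    using l by (intro finite_measure_mono) (auto intro: mult_left_mono)
  also have "\<dots> \<le> expectation (\<lambda>\<omega>. exp (l * X \<omega>)) / exp (l * T)"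
    by (rule integral_Markov_inequality_measure[OF int]) auto
  finally show ?thesis .
qed

lemma variance_le_quarter_range_sq:
  fixes X :: "'a \<Rightarrow> real"
  assumes X: "X \<in> borel_measurable M" and bnd: "AE \<omega> in M. a \<le> X \<omega> \<and> X \<omega> \<le> b"
  shows "variance X \<le> (b - a)\<^sup>2 / 4"
proof -
  define c where "c = (a + b) / 2"
  note int = integrable_of_AE_bounded[OF X bnd]
  have "expectation (\<lambda>\<omega>. (X \<omega> - c)\<^sup>2)
      = expectation (\<lambda>\<omega>. (X \<omega> - expectation X)\<^sup>2 + 2 * (expectation X - c) * (X \<omega> - expectation X)
                         + (expectation X - c)\<^sup>2)"
    by (intro Bochner_Integration.integral_cong refl) (simp add: power2_eq_square algebra_simps)
  also have "\<dots> = variance X + (expectation X - c)\<^sup>2"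
    using int(1) int(2)[of "expectation X"] by (simp add: prob_space)
  finally have E: "expectation (\<lambda>\<omega>. (X \<omega> - c)\<^sup>2) = variance X + (expectation X - c)\<^sup>2" .
  have sq_le: "(X \<omega> - c)\<^sup>2 \<le> (b - a)\<^sup>2 / 4" if "a \<le> X \<omega> \<and> X \<omega> \<le> b" for \<omega>
  proof -
    have "\<bar>X \<omega> - c\<bar> \<le> (b - a) / 2" using that unfolding c_def abs_le_iff by (auto simp: field_simps)
    then have "\<bar>X \<omega> - c\<bar>\<^sup>2 \<le> ((b - a) / 2)\<^sup>2" by (rule power_mono) simp
    then show ?thesis by (simp add: power_divide)
  qed
  have "AE \<omega> in M. (X \<omega> - c)\<^sup>2 \<le> (b - a)\<^sup>2 / 4"
    using bnd by (rule eventually_mono) (rule sq_le)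
  then have "expectation (\<lambda>\<omega>. (X \<omega> - c)\<^sup>2) \<le> expectation (\<lambda>\<omega>. (b - a)\<^sup>2 / 4)"
    using int(2)[of c] by (intro integral_mono_AE) auto
  then have "variance X + (expectation X - c)\<^sup>2 \<le> (b - a)\<^sup>2 / 4" using E by (simp add: prob_space)
  then show ?thesis using zero_le_power2[of "expectation X - c"] by linarith
qed

lemma prob_ge_1_minus_of_prob_not:
  assumes "{\<omega>\<in>space M. P \<omega>} \<in> events" "prob {\<omega>\<in>space M. \<not> P \<omega>} \<le> \<delta>"
  shows "1 - \<delta> \<le> prob {\<omega>\<in>space M. P \<omega>}"
proof -
  have "{\<omega>\<in>space M. \<not> P \<omega>} = space M - {\<omega>\<in>space M. P \<omega>}" by auto
  then show ?thesis using prob_compl[OF assms(1)] assms(2) by simp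
qed

lemma indep_vars_reindex_bij:
  assumes indep: "indep_vars M' X I" and e: "bij_betw e J I"
  shows "indep_vars (\<lambda>r. M' (e r)) (\<lambda>r. X (e r)) J"
proof -
  have sub: "{e r} \<subseteq> I" if "r \<in> J" for r using e that by (auto dest: bij_betwE)
  have disj: "disjoint_family_on (\<lambda>r. {e r}) J"
    using bij_betw_imp_inj_on[OF e] unfolding disjoint_family_on_def inj_on_def by auto
  have "indep_vars (\<lambda>r. M' (e r)) (\<lambda>r \<omega>. (\<lambda>f. f (e r)) (restrict (\<lambda>i. X i \<omega>) {e r})) J"
    by (rule indep_vars_compose2[OF indep_vars_restrict[OF indep sub disj]])
       (auto intro: measurable_component_singleton)
  then show ?thesis by simp
qed

lemma AE_bounds_of_distr:
  fixes X :: "'a \<Rightarrow> real"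
  assumes X: "X \<in> borel_measurable M" and Q: "distr M borel X = Q" "prob_space Q"
    and ab: "emeasure Q {a..b} = 1"
  shows "AE \<omega> in M. a \<le> X \<omega> \<and> X \<omega> \<le> b"
proof -
  interpret Q: prob_space Q by (rule Q(2))
  have "{a..b} \<in> sets Q" unfolding Q(1)[symmetric] by (simp add: atLeastAtMost_borel)
  moreover have "Q.prob {a..b} = 1" using ab by (simp add: Q.emeasure_eq_measure)
  ultimately have "AE x in Q. x \<in> {a..b}" using Q.AE_in_set_eq_1 by blast
  then have "AE \<omega> in M. X \<omega> \<in> {a..b}"
    using X unfolding Q(1)[symmetric] by (subst (asm) AE_distr_iff) auto
  then show ?thesis by (rule eventually_mono) auto
qed

lemma dmean_dvar_of_distr:
  fixes X :: "'a \<Rightarrow> real"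
  assumes "X \<in> borel_measurable M" "distr M borel X = Q"
  shows "dmean Q = expectation X" and "dvar Q = variance X"
proof -
  show mean: "dmean Q = expectation X"
    unfolding dmean_def assms(2)[symmetric] by (simp add: integral_distr[OF assms(1)])
  show "dvar Q = variance X"
    unfolding dvar_def mean unfolding assms(2)[symmetric] by (simp add: integral_distr[OF assms(1)])
qed

end

lemma ln_two_div_ge:
  fixes \<delta> :: real assumes "0 < \<delta>"
  shows "ln (1 / \<delta>) + 1/2 \<le> ln (2 / \<delta>)"
  using assms ln2_ge_two_thirds by (simp add: ln_div)

section \<open>Choosing the Chernoff parameter\<close>

lemma lower_gap_ge:
  fixes n M L :: real
  assumes n: "2 \<le> n" and M: "0 < M" and L: "0 < L"
  shows "2 * M * L / (n - 1) \<le> 8 * M * L / (3 * (n - 1)) - 2 * M * L / (3 * n)"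
proof -
  define q where "q = 2 * M * L / (3 * (n - 1))"
  have "2 * M * L / (3 * n) \<le> q" unfolding q_def using n M L by (intro divide_left_mono) auto
  moreover have "8 * M * L / (3 * (n - 1)) = 4 * q" unfolding q_def by simp
  moreover have "2 * M * L / (n - 1) = 3 * q" unfolding q_def using n by (simp add: field_simps)
  ultimately show ?thesis by simp
qed

lemma upper_gap_ge:
  fixes n M L :: real
  assumes n: "2 \<le> n" and M: "0 < M" and L: "0 < L"
  shows "2 * M * L / (n - 1) \<le> 2 * M * L / (3 * n) + (13 * M * L / (3 * (n - 1)) - 8 * M * L / (3 * (n - 1)))"
proof -
  define q where "q = M * L / (3 * (n - 1))"
  have "1 / (3 * (n - 1)) \<le> 2 / (3 * n)" using n by (simp add: field_simps)
  then have "M * L * (1 / (3 * (n - 1))) \<le> M * L * (2 / (3 * n))"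
    using M L by (intro mult_left_mono) auto
  then have "q \<le> 2 * M * L / (3 * n)" unfolding q_def by (simp add: algebra_simps)
  moreover have "13 * M * L / (3 * (n - 1)) - 8 * M * L / (3 * (n - 1)) = 5 * q"
    unfolding q_def by (simp add: diff_divide_distrib[symmetric] algebra_simps)
  moreover have "2 * M * L / (n - 1) = 6 * q" unfolding q_def using n by (simp add: field_simps)
  ultimately show ?thesis by simp
qed

lemma bernstein_gap:
  fixes n m M L A :: real
  assumes n: "2 \<le> n" and m: "n - 1 \<le> 2 * m" and M: "0 < M" and L: "0 < L"
    and A: "2 * M * L / (n - 1) \<le> A"
  shows "0 < A / sqrt (2 * L / n)" and "L * M\<^sup>2 \<le> m * (A / sqrt (2 * L / n))\<^sup>2"
proof -
  have n1: "0 < n - 1" using n by simp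
  have "0 < 2 * M * L / (n - 1)" using n1 M L by simp
  then show "0 < A / sqrt (2 * L / n)" using A n L by simp
  have c: "(sqrt (2 * L / n))\<^sup>2 = 2 * L / n" using n L by simp
  have "(2 * M * L / (n - 1))\<^sup>2 \<le> A\<^sup>2" using A n1 M L by (intro power_mono) auto
  then have "(2 * M * L / (n - 1))\<^sup>2 / (2 * L / n) \<le> A\<^sup>2 / (2 * L / n)"
    by (rule divide_right_mono) (use L n in simp)
  also have "A\<^sup>2 / (2 * L / n) = (A / sqrt (2 * L / n))\<^sup>2" by (simp add: power_divide c)
  also have "(2 * M * L / (n - 1))\<^sup>2 / (2 * L / n) = 2 * n * M\<^sup>2 * L / (n - 1)\<^sup>2"
    using n1 n L by (simp add: power_divide power_mult_distrib field_simps) (simp add: power2_eq_square)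
  finally have s: "2 * n * M\<^sup>2 * L / (n - 1)\<^sup>2 \<le> (A / sqrt (2 * L / n))\<^sup>2" .
  have "L * M\<^sup>2 \<le> n * M\<^sup>2 * L / (n - 1)"
    using n1 M L by (simp add: field_simps)
  also have "\<dots> = ((n - 1) / 2) * (2 * n * M\<^sup>2 * L / (n - 1)\<^sup>2)"
  proof -
    have "d \<noteq> 0 \<Longrightarrow> n * M\<^sup>2 * L / d = (d / 2) * (2 * n * M\<^sup>2 * L / d\<^sup>2)" for d :: real
      by (simp add: field_simps power2_eq_square)
    then show ?thesis using n1 by simp
  qed
  also have "\<dots> \<le> m * (2 * n * M\<^sup>2 * L / (n - 1)\<^sup>2)"
    using m n1 M L n by (intro mult_right_mono) auto
  also have "\<dots> \<le> m * (A / sqrt (2 * L / n))\<^sup>2"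
    using s m n1 by (intro mult_left_mono) auto
  finally show "L * M\<^sup>2 \<le> m * (A / sqrt (2 * L / n))\<^sup>2" .
qed

lemma lower_exponent_gap:
  fixes m M \<sigma> s L L' :: real
  assumes m: "0 < m" and M: "0 < M" and ss: "s \<le> \<sigma>" and s: "0 < s"
    and F: "L * M\<^sup>2 \<le> m * s\<^sup>2" and LL: "L' + 1/4 \<le> L" and L': "0 \<le> L'"
  shows "0 < \<sigma> * s - M\<^sup>2 / (8 * m)" and "\<sigma>\<^sup>2 * M\<^sup>2 * L' \<le> m * (\<sigma> * s - M\<^sup>2 / (8 * m))\<^sup>2"
proof -
  have sig: "0 < \<sigma>" using ss s by simp
  have M2: "0 < M\<^sup>2" using M by simp
  have "M\<^sup>2 / (8 * m) < L * M\<^sup>2 / m" using LL L' M2 m by (simp add: field_simps)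
  also have "\<dots> \<le> s\<^sup>2" using F m by (simp add: field_simps)
  also have "\<dots> \<le> \<sigma> * s" using ss s by (simp add: power2_eq_square mult_right_mono)
  finally show "0 < \<sigma> * s - M\<^sup>2 / (8 * m)" by simp
  have "\<sigma>\<^sup>2 * ((L' + 1/4) * M\<^sup>2) \<le> \<sigma>\<^sup>2 * (m * s\<^sup>2)"
    using F LL M2 by (intro mult_left_mono) (auto intro: order.trans[OF mult_right_mono])
  moreover have "\<sigma> * s * M\<^sup>2 \<le> \<sigma> * \<sigma> * M\<^sup>2" using ss sig by (intro mult_right_mono mult_left_mono) auto
  moreover have "m * (\<sigma> * s - M\<^sup>2 / (8 * m))\<^sup>2 = \<sigma>\<^sup>2 * (m * s\<^sup>2) - \<sigma> * s * M\<^sup>2 / 4 + M\<^sup>2 * M\<^sup>2 / (64 * m)"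
    using m by (simp add: power2_eq_square field_simps)
  moreover have "0 \<le> M\<^sup>2 * M\<^sup>2 / (64 * m)" using m by simp
  ultimately show "\<sigma>\<^sup>2 * M\<^sup>2 * L' \<le> m * (\<sigma> * s - M\<^sup>2 / (8 * m))\<^sup>2"
    using m by (simp add: power2_eq_square algebra_simps)
qed

lemma lower_exponent_choice:
  fixes m M \<sigma> s L L' :: real
  assumes m: "0 < m" and M: "0 < M" and ss: "s \<le> \<sigma>" and s: "0 < s"
    and F: "L * M\<^sup>2 \<le> m * s\<^sup>2" and LL: "L' + 1/4 \<le> L" and L': "0 \<le> L'"
  defines "w \<equiv> \<sigma>\<^sup>2 - M\<^sup>2 / (8 * m)"
  shows "\<exists>l. 0 \<le> l \<and> l * M\<^sup>2 \<le> 4 * m \<and> l * (\<sigma> - s)\<^sup>2 - (l - l\<^sup>2 * M\<^sup>2 / (4 * m)) * w \<le> - L'"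
proof -
  define G where "G = \<sigma> * s - M\<^sup>2 / (8 * m)"
  define T where "T = (\<sigma> - s)\<^sup>2"
  define l where "l = 2 * m * (w - T) / (M\<^sup>2 * \<sigma>\<^sup>2)"
  note gap = lower_exponent_gap[OF m M ss s F LL L', folded G_def]
  have sig: "0 < \<sigma>" using ss s by simp
  have M2: "0 < M\<^sup>2" using M by simp
  have wT: "G \<le> w - T"
    using mult_right_mono[OF ss, of s] s unfolding G_def w_def T_def by (simp add: power2_eq_square algebra_simps)
  have "0 \<le> M\<^sup>2 / (8 * m)" using m by simp
  then have "w - T \<le> 2 * \<sigma>\<^sup>2"
    unfolding w_def T_def using zero_le_power2[of "\<sigma> - s"] zero_le_power2[of \<sigma>] by linarith
  then have "2 * m * (w - T) / \<sigma>\<^sup>2 \<le> 2 * m * (2 * \<sigma>\<^sup>2) / \<sigma>\<^sup>2"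
    using m by (intro divide_right_mono mult_left_mono) auto
  moreover have "l * M\<^sup>2 = 2 * m * (w - T) / \<sigma>\<^sup>2" unfolding l_def using M2 sig by (simp add: field_simps)
  ultimately have lM: "l * M\<^sup>2 \<le> 4 * m" using sig by simp
  have "l * T - (l - l\<^sup>2 * M\<^sup>2 / (4 * m)) * w = - l * (w - T) + l\<^sup>2 * M\<^sup>2 / (4 * m) * w"
    by (simp add: algebra_simps)
  also have "\<dots> \<le> - l * (w - T) + l\<^sup>2 * M\<^sup>2 / (4 * m) * \<sigma>\<^sup>2"
    using m unfolding w_def by (intro add_left_mono mult_left_mono) auto
  also have "\<dots> = - m * (w - T)\<^sup>2 / (M\<^sup>2 * \<sigma>\<^sup>2)"
    unfolding l_def using m M sig by (simp add: field_simps power2_eq_square)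
  also have "\<dots> \<le> - L'"
  proof -
    have "G\<^sup>2 \<le> (w - T)\<^sup>2" using wT gap(1) by (intro power_mono) auto
    then have "\<sigma>\<^sup>2 * M\<^sup>2 * L' \<le> m * (w - T)\<^sup>2" using gap(2) m by (meson mult_left_mono order.trans less_imp_le)
    then show ?thesis using M2 sig by (simp add: field_simps)
  qed
  finally have "l * T - (l - l\<^sup>2 * M\<^sup>2 / (4 * m)) * w \<le> - L'" .
  moreover have "0 \<le> l" unfolding l_def using wT gap(1) m by simp
  ultimately show ?thesis using lM unfolding T_def by blast
qed

lemma upper_exponent_gap:
  fixes m M R s v1 L L' :: real
  assumes m: "0 < m" and M: "0 < M" and R: "0 \<le> R" and s: "0 < s"
    and F: "L * M\<^sup>2 \<le> m * s\<^sup>2" and LL: "L' + 1/2 \<le> L" and L': "0 \<le> L'"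
  defines "v1 \<equiv> R\<^sup>2 + M\<^sup>2 / (8 * m)"
  shows "M\<^sup>2 * (L' + 3/8) \<le> m * ((R + s)\<^sup>2 - v1)"
    and "2 * L' * M\<^sup>2 * v1 \<le> m * ((R + s)\<^sup>2 - v1)\<^sup>2"
proof -
  define e where "e = M\<^sup>2 / (8 * m)"
  define P where "P = s\<^sup>2 - e"
  define G where "G = (R + s)\<^sup>2 - v1"
  have M2: "0 < M\<^sup>2" using M by simp
  have GP: "G = 2 * R * s + P" unfolding G_def v1_def P_def e_def by (simp add: power2_eq_square algebra_simps)
  have "(L' + 1/2) * M\<^sup>2 \<le> L * M\<^sup>2" using LL M2 by (intro mult_right_mono) auto
  moreover have "m * P = m * s\<^sup>2 - M\<^sup>2 / 8" unfolding P_def e_def using m by (simp add: field_simps)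
  ultimately have mP: "M\<^sup>2 * (L' + 3/8) \<le> m * P" using F by (simp add: algebra_simps)
  have "0 < M\<^sup>2 * (L' + 3/8)" using M2 L' by simp
  then have "0 < m * P" using mP by linarith
  then have P0: "0 \<le> P" using m by (simp add: zero_less_mult_iff)
  have RS: "0 \<le> 2 * R * s" using R s by simp
  show "M\<^sup>2 * (L' + 3/8) \<le> m * ((R + s)\<^sup>2 - v1)"
  proof -
    have "P \<le> (R + s)\<^sup>2 - v1" using GP RS unfolding G_def by linarith
    then show ?thesis using mP m by (meson mult_left_mono order.trans less_imp_le)
  qed
  have G2: "4 * R\<^sup>2 * s\<^sup>2 + P\<^sup>2 \<le> G\<^sup>2"
    unfolding GP using RS P0 by (simp add: power2_eq_square algebra_simps)
  have "2 * L' * (M\<^sup>2 * R\<^sup>2) \<le> 4 * L * (M\<^sup>2 * R\<^sup>2)" using LL L' by (intro mult_right_mono) auto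
  then have a1: "2 * L' * M\<^sup>2 * R\<^sup>2 \<le> 4 * R\<^sup>2 * (m * s\<^sup>2)"
    using mult_left_mono[OF F, of "4 * R\<^sup>2"] by (simp add: algebra_simps)
  have "(M\<^sup>2 * (L' + 3/8))\<^sup>2 \<le> (m * P)\<^sup>2" using mP M2 L' by (intro power_mono) auto
  moreover have "L' / 4 \<le> (L' + 3/8)\<^sup>2" using L' by (simp add: power2_eq_square algebra_simps)
  then have "M\<^sup>2 * M\<^sup>2 * (L' / 4) \<le> M\<^sup>2 * M\<^sup>2 * (L' + 3/8)\<^sup>2" by (intro mult_left_mono) auto
  ultimately have "M\<^sup>2 * M\<^sup>2 * (L' / 4) \<le> m * (m * P\<^sup>2)" by (simp add: power2_eq_square algebra_simps)
  then have a2: "2 * L' * M\<^sup>2 * e \<le> m * P\<^sup>2" unfolding e_def using m by (simp add: field_simps)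
  have "2 * L' * M\<^sup>2 * v1 = 2 * L' * M\<^sup>2 * R\<^sup>2 + 2 * L' * M\<^sup>2 * e" unfolding v1_def e_def by (simp add: algebra_simps)
  also have "\<dots> \<le> m * (4 * R\<^sup>2 * s\<^sup>2 + P\<^sup>2)" using a1 a2 by (simp add: algebra_simps)
  also have "\<dots> \<le> m * G\<^sup>2" using G2 m by (intro mult_left_mono) auto
  finally show "2 * L' * M\<^sup>2 * v1 \<le> m * ((R + s)\<^sup>2 - v1)\<^sup>2" unfolding G_def .
qed

text \<open>The unconstrained optimum \<open>l = m G / (M\<^sup>2 v)\<close> is admissible only when \<open>G \<le> 2 v\<close>;
  otherwise the largest admissible value \<open>2 m / M\<^sup>2\<close> already suffices.\<close>

lemma quadratic_exponent_choice:
  fixes m M G v L' :: real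
  assumes m: "0 < m" and M: "0 < M" and v: "0 < v" and L': "0 \<le> L'"
    and G1: "M\<^sup>2 * (L' + 3/8) \<le> m * G" and G2: "2 * L' * M\<^sup>2 * v \<le> m * G\<^sup>2"
  shows "\<exists>l. 0 \<le> l \<and> l * M\<^sup>2 \<le> 2 * m \<and> - l * G + l\<^sup>2 * M\<^sup>2 / (2 * m) * v \<le> - L'"
proof -
  have M2: "0 < M\<^sup>2" using M by simp
  have "0 < M\<^sup>2 * (L' + 3/8)" using M2 L' by simp
  then have "0 < m * G" using G1 by linarith
  then have G0: "0 \<le> G" using m by (simp add: zero_less_mult_iff)
  show ?thesis
  proof (cases "G \<le> 2 * v")
    case True
    define l where "l = m * G / (M\<^sup>2 * v)"
    have "l * M\<^sup>2 = m * G / v" unfolding l_def using M2 v by (simp add: field_simps)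
    also have "\<dots> \<le> 2 * m" using True m v by (simp add: field_simps)
    finally have lM: "l * M\<^sup>2 \<le> 2 * m" .
    have "- l * G + l\<^sup>2 * M\<^sup>2 / (2 * m) * v = - m * G\<^sup>2 / (2 * M\<^sup>2 * v)"
      unfolding l_def using m M2 v by (simp add: field_simps power2_eq_square)
    also have "\<dots> \<le> - L'" using G2 M2 v by (simp add: field_simps)
    finally have "- l * G + l\<^sup>2 * M\<^sup>2 / (2 * m) * v \<le> - L'" .
    moreover have "0 \<le> l" unfolding l_def using m G0 v M2 by simp
    ultimately show ?thesis using lM by blast
  next
    case False
    define l where "l = 2 * m / M\<^sup>2"
    have "- l * G + l\<^sup>2 * M\<^sup>2 / (2 * m) * v = - (2 * m / M\<^sup>2) * (G - v)"
      unfolding l_def using m M2 by (simp add: field_simps power2_eq_square)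
    also have "\<dots> \<le> - (m * G) / M\<^sup>2"
      using False m M2 by (simp add: field_simps)
    also have "\<dots> \<le> - L'"
    proof -
      have "M\<^sup>2 * L' + M\<^sup>2 * (3/8) \<le> m * G" using G1 by (simp add: distrib_left)
      then have "M\<^sup>2 * L' \<le> m * G" using M2 by linarith
      then show ?thesis using M2 by (simp add: field_simps)
    qed
    finally have "- l * G + l\<^sup>2 * M\<^sup>2 / (2 * m) * v \<le> - L'" .
    moreover have "0 \<le> l" "l * M\<^sup>2 \<le> 2 * m" unfolding l_def using m M2 by simp_all
    ultimately show ?thesis by blast
  qed
qed

lemma upper_exponent_choice:
  fixes m M R s v L L' :: real
  assumes m: "0 < m" and M: "0 < M" and R: "0 \<le> R" and s: "0 < s"
    and F: "L * M\<^sup>2 \<le> m * s\<^sup>2" and LL: "L' + 1/2 \<le> L" and L': "0 \<le> L'"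
    and v: "v \<le> R\<^sup>2 + M\<^sup>2 / (8 * m)"
  shows "\<exists>l. 0 \<le> l \<and> l * M\<^sup>2 \<le> 2 * m \<and> - l * (R + s)\<^sup>2 + (l + l\<^sup>2 * M\<^sup>2 / (2 * m)) * v \<le> - L'"
proof -
  define v1 where "v1 = R\<^sup>2 + M\<^sup>2 / (8 * m)"
  define G where "G = (R + s)\<^sup>2 - v1"
  note gap = upper_exponent_gap[OF m M R s F LL L', folded v1_def G_def]
  have "0 < v1" unfolding v1_def using m M by (simp add: add_nonneg_pos)
  then obtain l where l: "0 \<le> l" "l * M\<^sup>2 \<le> 2 * m" "- l * G + l\<^sup>2 * M\<^sup>2 / (2 * m) * v1 \<le> - L'"
    using quadratic_exponent_choice[OF m M _ L' gap] by blast
  have "(l + l\<^sup>2 * M\<^sup>2 / (2 * m)) * v \<le> (l + l\<^sup>2 * M\<^sup>2 / (2 * m)) * v1"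
    using l(1) m v unfolding v1_def by (intro mult_left_mono) auto
  then have "- l * (R + s)\<^sup>2 + (l + l\<^sup>2 * M\<^sup>2 / (2 * m)) * v \<le> - L'"
    using l(3) unfolding G_def by (simp add: algebra_simps)
  then show ?thesis using l(1,2) by blast
qed

section \<open>The sample variance of bounded independent observations\<close>

locale bounded_indep_sample = prob_space +
  fixes n :: nat and Y :: "nat \<Rightarrow> 'a \<Rightarrow> real" and a b :: real
  assumes indep: "indep_vars (\<lambda>_. borel) Y {..<n}"
    and bounded: "\<And>r. r < n \<Longrightarrow> AE \<omega> in M. a \<le> Y r \<omega> \<and> Y r \<omega> \<le> b"
    and two_le_n: "2 \<le> n"
begin

abbreviation m where "m \<equiv> n div 2"

definition half_sq_diff :: "nat \<Rightarrow> nat \<Rightarrow> 'a \<Rightarrow> real" where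
  "half_sq_diff i j \<omega> = (Y i \<omega> - Y j \<omega>)\<^sup>2 / 2"

definition sample_var :: "'a \<Rightarrow> real" where
  "sample_var \<omega> = (\<Sum>i<n. \<Sum>j<n. if i = j then 0 else half_sq_diff i j \<omega>) / (real n * (real n - 1))"

definition pooled_var :: real where
  "pooled_var = (\<Sum>r<n. variance (Y r)) / real n"

text \<open>On the pooled window, \<open>n = Btk B t k \<ge> 2\<close>, these are \<open>psi\<close> and \<open>psihat\<close>.\<close>

definition conf_radius :: "real \<Rightarrow> real" where
  "conf_radius \<delta> = sqrt pooled_var * sqrt (2 * ln (2 / \<delta>) / real n)
                    + 2 * (b - a) * ln (2 / \<delta>) / (3 * real n)"

definition emp_conf_radius :: "real \<Rightarrow> 'a \<Rightarrow> real" where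
  "emp_conf_radius \<delta> \<omega> = sqrt (sample_var \<omega>) * sqrt (2 * ln (2 / \<delta>) / real n)
                          + 8 * (b - a) * ln (2 / \<delta>) / (3 * (real n - 1))"

lemma m_pos: "0 < m" using two_le_n by auto

lemma Y_measurable[measurable]: "r < n \<Longrightarrow> Y r \<in> borel_measurable M"
  using indep unfolding indep_vars_def by auto

lemma half_sq_diff_measurable[measurable]: "i < n \<Longrightarrow> j < n \<Longrightarrow> half_sq_diff i j \<in> borel_measurable M"
  unfolding half_sq_diff_def by measurable

lemma sample_var_measurable[measurable]: "sample_var \<in> borel_measurable M"
  unfolding sample_var_def by measurable

lemma integrable_Y: "r < n \<Longrightarrow> integrable M (Y r)"
  and integrable_Y_sq: "r < n \<Longrightarrow> integrable M (\<lambda>\<omega>. (Y r \<omega> - c)\<^sup>2)"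
  using integrable_of_AE_bounded[OF Y_measurable bounded] by auto

lemma AE_half_sq_diff_bounded:
  assumes "i < n" "j < n"
  shows "AE \<omega> in M. 0 \<le> half_sq_diff i j \<omega> \<and> half_sq_diff i j \<omega> \<le> (b - a)\<^sup>2 / 2"
  using bounded[OF assms(1)] bounded[OF assms(2)]
  by eventually_elim (auto simp: half_sq_diff_def intro: sq_diff_le_sq_range)

lemma AE_half_sq_diff_bounded_all:
  "AE \<omega> in M. \<forall>i\<in>{..<n}. \<forall>j\<in>{..<n}. 0 \<le> half_sq_diff i j \<omega> \<and> half_sq_diff i j \<omega> \<le> (b - a)\<^sup>2 / 2"
  using AE_half_sq_diff_bounded by (intro AE_finite_allI) auto

lemma sample_var_nonneg: "0 \<le> sample_var \<omega>"
  using two_le_n unfolding sample_var_def half_sq_diff_def by (intro divide_nonneg_pos sum_nonneg) auto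

lemma integrable_exp_sample_var: "integrable M (\<lambda>\<omega>. exp (c * sample_var \<omega>))"
proof (rule integrable_exp_of_AE_bounded[OF sample_var_measurable])
  have den: "0 < real n * (real n - 1)" using two_le_n by auto
  show "AE \<omega> in M. 0 \<le> sample_var \<omega>
      \<and> sample_var \<omega> \<le> (\<Sum>i<n. \<Sum>j<n. (b - a)\<^sup>2 / 2) / (real n * (real n - 1))"
    using AE_half_sq_diff_bounded_all
  proof (rule eventually_mono)
    fix \<omega> assume "\<forall>i\<in>{..<n}. \<forall>j\<in>{..<n}. 0 \<le> half_sq_diff i j \<omega> \<and> half_sq_diff i j \<omega> \<le> (b - a)\<^sup>2 / 2"
    then have "(\<Sum>i<n. \<Sum>j<n. if i = j then 0 else half_sq_diff i j \<omega>) \<le> (\<Sum>i<n. \<Sum>j<n. (b - a)\<^sup>2 / 2)"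
      by (intro sum_mono) auto
    then have "sample_var \<omega> \<le> (\<Sum>i<n. \<Sum>j<n. (b - a)\<^sup>2 / 2) / (real n * (real n - 1))"
      unfolding sample_var_def by (rule divide_right_mono) (use den in simp)
    then show "0 \<le> sample_var \<omega> \<and> sample_var \<omega> \<le> (\<Sum>i<n. \<Sum>j<n. (b - a)\<^sup>2 / 2) / (real n * (real n - 1))"
      using sample_var_nonneg by simp
  qed
qed

lemma sample_var_eq_centered:
  "sample_var \<omega> = (\<Sum>r<n. (Y r \<omega> - (\<Sum>s<n. Y s \<omega>) / real n)\<^sup>2) / (real n - 1)"
  using sum_half_sq_diff_eq[of n "\<lambda>r. Y r \<omega>"] two_le_n
  unfolding sample_var_def half_sq_diff_def by simp

lemma expectation_centered: "r < n \<Longrightarrow> expectation (\<lambda>\<omega>. Y r \<omega> - expectation (Y r)) = 0"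
  using integrable_Y by (simp add: prob_space)

lemma expectation_half_sq_diff:
  assumes ij: "i < n" "j < n" "i \<noteq> j"
  shows "expectation (half_sq_diff i j)
       = (variance (Y i) + variance (Y j) + (expectation (Y i) - expectation (Y j))\<^sup>2) / 2"
proof -
  define X where "X r \<omega> = Y r \<omega> - expectation (Y r)" for r \<omega>
  define d where "d = expectation (Y i) - expectation (Y j)"
  have ind: "indep_vars (\<lambda>_. borel) X {i, j}"
    unfolding X_def using ij
    by (intro indep_vars_compose2[where X=Y and M'="\<lambda>_. borel", OF indep_vars_subset[OF indep]]) auto
  have intX: "integrable M (X r)" "integrable M (\<lambda>\<omega>. (X r \<omega>)\<^sup>2)" if "r < n" for r
    unfolding X_def using that by (auto intro: integrable_Y integrable_Y_sq)
  have prod: "integrable M (\<lambda>\<omega>. X i \<omega> * X j \<omega>)" "expectation (\<lambda>\<omega>. X i \<omega> * X j \<omega>) = 0"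
    using indep_vars_integrable[OF _ ind] indep_vars_lebesgue_integral[OF _ ind]
      intX ij expectation_centered unfolding X_def by auto
  have "half_sq_diff i j \<omega>
      = ((X i \<omega>)\<^sup>2 + (X j \<omega>)\<^sup>2 + d\<^sup>2 - 2 * (X i \<omega> * X j \<omega>) + 2 * d * X i \<omega> - 2 * d * X j \<omega>) / 2" for \<omega>
    unfolding half_sq_diff_def X_def d_def by (simp add: power2_eq_square algebra_simps)
  then have "expectation (half_sq_diff i j)
      = expectation (\<lambda>\<omega>. ((X i \<omega>)\<^sup>2 + (X j \<omega>)\<^sup>2 + d\<^sup>2 - 2 * (X i \<omega> * X j \<omega>) + 2 * d * X i \<omega> - 2 * d * X j \<omega>) / 2)"
    by (intro Bochner_Integration.integral_cong) auto
  also have "\<dots>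
      = (expectation (\<lambda>\<omega>. (X i \<omega>)\<^sup>2) + expectation (\<lambda>\<omega>. (X j \<omega>)\<^sup>2) + d\<^sup>2
         - 2 * expectation (\<lambda>\<omega>. X i \<omega> * X j \<omega>) + 2 * d * expectation (X i) - 2 * d * expectation (X j)) / 2"
    using intX[OF ij(1)] intX[OF ij(2)] prod(1) by (simp add: prob_space)
  finally show ?thesis
    using prod(2) expectation_centered ij unfolding X_def d_def by simp
qed

lemma indep_vars_half_sq_diff_pairs:
  assumes p: "p permutes {..<n}" and g[measurable]: "\<And>k. g k \<in> borel_measurable borel"
  shows "indep_vars (\<lambda>_. borel) (\<lambda>k \<omega>. g k (half_sq_diff (p (2*k)) (p (2*k+1)) \<omega>)) {..<m}"
proof -
  define K where "K k = {p (2*k), p (2*k+1)}" for k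
  have inS: "x < n \<Longrightarrow> p x < n" for x using permutes_in_image[OF p, of x] by auto
  have lt: "k < m \<Longrightarrow> 2*k+1 < n" for k by linarith
  have Ksub: "K k \<subseteq> {..<n}" if "k \<in> {..<m}" for k
    using that lt[of k] inS unfolding K_def by auto
  have injp: "inj p" using p by (rule permutes_inj)
  have disj: "disjoint_family_on K {..<m}"
    unfolding disjoint_family_on_def K_def
  proof (intro ballI impI)
    fix k l assume "k \<in> {..<m}" "l \<in> {..<m}" "k \<noteq> l"
    then show "{p (2 * k), p (2 * k + 1)} \<inter> {p (2 * l), p (2 * l + 1)} = {}"
      using injp by (auto simp: inj_eq)
  qed
  have R: "indep_vars (\<lambda>k. PiM (K k) (\<lambda>_. borel)) (\<lambda>k \<omega>. restrict (\<lambda>i. Y i \<omega>) (K k)) {..<m}"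
    by (rule indep_vars_restrict[OF indep Ksub disj])
  define F where "F k f = g k ((f (p (2*k)) - f (p (2*k+1)))\<^sup>2 / 2)" for k and f :: "nat \<Rightarrow> real"
  have Fm: "F k \<in> measurable (PiM (K k) (\<lambda>_. borel)) borel" for k
  proof -
    have "(\<lambda>f. f (p (2*k))) \<in> measurable (PiM (K k) (\<lambda>_. borel)) borel"
      by (rule measurable_component_singleton) (simp add: K_def)
    moreover have "(\<lambda>f. f (p (2*k+1))) \<in> measurable (PiM (K k) (\<lambda>_. borel)) borel"
      by (rule measurable_component_singleton) (simp add: K_def)
    ultimately show ?thesis unfolding F_def by measurable
  qed
  have C: "indep_vars (\<lambda>_. borel) (\<lambda>k \<omega>. F k (restrict (\<lambda>i. Y i \<omega>) (K k))) {..<m}"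
    by (rule indep_vars_compose2[OF R Fm])
  show ?thesis
    by (rule indep_vars_cong[THEN iffD1, OF refl _ refl C]) (auto simp: F_def K_def half_sq_diff_def fun_eq_iff)
qed

lemma pair_indices: "p permutes {..<n} \<Longrightarrow> k < m \<Longrightarrow> p (2*k) < n \<and> p (2*k+1) < n \<and> p (2*k) \<noteq> p (2*k+1)"
proof -
  assume p: "p permutes {..<n}" and k: "k < m"
  have lt: "2*k+1 < n" using k by linarith
  have "p (2*k) \<noteq> p (2*k+1)" using permutes_inj[OF p] by (auto simp: inj_eq)
  then show ?thesis using permutes_in_image[OF p, of "2*k"] permutes_in_image[OF p, of "2*k+1"] lt by auto
qed

lemma sample_var_eq_permutation_average:
  "sample_var \<omega> = (\<Sum>p\<in>{p. p permutes {..<n}}. (1 / fact n) * ((1 / real m) * (\<Sum>k<m. half_sq_diff (p (2*k)) (p (2*k+1)) \<omega>)))"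
proof -
  have pairs: "(\<Sum>p\<in>{p. p permutes {..<n}}. \<Sum>k<m. half_sq_diff (p (2*k)) (p (2*k+1)) \<omega>)
       = real m * (fact n / (real n * (real n - 1))) * (\<Sum>i<n. \<Sum>j<n. if i = j then 0 else half_sq_diff i j \<omega>)"
    by (rule sum_permutations_consecutive_pairs[OF _ two_le_n]) (simp add: half_sq_diff_def power2_commute)
  have "(\<Sum>p\<in>{p. p permutes {..<n}}. (1 / fact n) * ((1 / real m) * (\<Sum>k<m. half_sq_diff (p (2*k)) (p (2*k+1)) \<omega>)))
      = (1 / fact n) * (1 / real m) * (\<Sum>p\<in>{p. p permutes {..<n}}. \<Sum>k<m. half_sq_diff (p (2*k)) (p (2*k+1)) \<omega>)"
    by (simp add: sum_distrib_left mult.assoc)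
  also have "\<dots> = sample_var \<omega>" unfolding pairs sample_var_def using m_pos by (simp add: field_simps)
  finally show ?thesis by simp
qed

lemma mgf_consecutive_pairs_le:
  assumes p: "p permutes {..<n}"
    and pair: "\<And>i j. i < n \<Longrightarrow> j < n \<Longrightarrow> i \<noteq> j \<Longrightarrow>
      expectation (\<lambda>\<omega>. exp (s * half_sq_diff i j \<omega>)) \<le> exp (g i j)"
  shows "integrable M (\<lambda>\<omega>. exp (s * (\<Sum>k<m. half_sq_diff (p (2*k)) (p (2*k+1)) \<omega>)))"
    and "expectation (\<lambda>\<omega>. exp (s * (\<Sum>k<m. half_sq_diff (p (2*k)) (p (2*k+1)) \<omega>)))
         \<le> exp (\<Sum>k<m. g (p (2*k)) (p (2*k+1)))"
proof -
  note pi = pair_indices[OF p]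
  have int: "integrable M (\<lambda>\<omega>. exp (s * half_sq_diff (p (2*k)) (p (2*k+1)) \<omega>))" if "k < m" for k
    using pi[OF that] by (intro integrable_exp_of_AE_bounded[OF half_sq_diff_measurable AE_half_sq_diff_bounded]) auto
  have ind: "indep_vars (\<lambda>_. borel) (\<lambda>k \<omega>. exp (s * half_sq_diff (p (2*k)) (p (2*k+1)) \<omega>)) {..<m}"
    using p by (intro indep_vars_half_sq_diff_pairs[where g="\<lambda>k x. exp (s * x)"]) auto
  have prod: "exp (s * (\<Sum>k<m. half_sq_diff (p (2*k)) (p (2*k+1)) \<omega>))
      = (\<Prod>k<m. exp (s * half_sq_diff (p (2*k)) (p (2*k+1)) \<omega>))" for \<omega>
    by (simp add: sum_distrib_left exp_sum)
  show "integrable M (\<lambda>\<omega>. exp (s * (\<Sum>k<m. half_sq_diff (p (2*k)) (p (2*k+1)) \<omega>)))"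
    unfolding prod by (rule indep_vars_integrable[OF _ ind]) (use int in auto)
  have "expectation (\<lambda>\<omega>. exp (s * (\<Sum>k<m. half_sq_diff (p (2*k)) (p (2*k+1)) \<omega>)))
      = (\<Prod>k<m. expectation (\<lambda>\<omega>. exp (s * half_sq_diff (p (2*k)) (p (2*k+1)) \<omega>)))"
    unfolding prod by (rule indep_vars_lebesgue_integral[OF _ ind]) (use int in auto)
  also have "\<dots> \<le> (\<Prod>k<m. exp (g (p (2*k)) (p (2*k+1))))"
    using pair pi by (intro prod_mono conjI integral_nonneg_AE AE_I2) auto
  also have "\<dots> = exp (\<Sum>k<m. g (p (2*k)) (p (2*k+1)))" by (simp add: exp_sum)
  finally show "expectation (\<lambda>\<omega>. exp (s * (\<Sum>k<m. half_sq_diff (p (2*k)) (p (2*k+1)) \<omega>)))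
      \<le> exp (\<Sum>k<m. g (p (2*k)) (p (2*k+1)))" .
qed

text \<open>Jensen's inequality for \<open>exp\<close> applied to the permutation average.\<close>

lemma mgf_sample_var_le:
  assumes pair: "\<And>i j. i < n \<Longrightarrow> j < n \<Longrightarrow> i \<noteq> j \<Longrightarrow>
      expectation (\<lambda>\<omega>. exp ((c / m) * half_sq_diff i j \<omega>)) \<le> exp (g i j)"
    and B: "\<And>p. p permutes {..<n} \<Longrightarrow> (\<Sum>k<m. g (p (2*k)) (p (2*k+1))) \<le> B"
  shows "expectation (\<lambda>\<omega>. exp (c * sample_var \<omega>)) \<le> exp B"
proof -
  define P where "P = {p. p permutes {..<n}}"
  define W where "W p \<omega> = (c / m) * (\<Sum>k<m. half_sq_diff (p (2*k)) (p (2*k+1)) \<omega>)" for p \<omega>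
  have finP: "finite P" unfolding P_def by (intro finite_permutations) auto
  have cardP: "card P = fact n" unfolding P_def by (intro card_permutations) auto
  have Pne: "P \<noteq> {}" using cardP by (metis card.empty fact_nonzero of_nat_0 of_nat_eq_0_iff)
  have int_W: "integrable M (\<lambda>\<omega>. exp (W p \<omega>))" and expect_W: "expectation (\<lambda>\<omega>. exp (W p \<omega>)) \<le> exp B"
    if "p \<in> P" for p
    using mgf_consecutive_pairs_le[of p "c / m" g] pair B[of p] that
    unfolding W_def P_def by (auto intro: order.trans)
  have "exp (c * sample_var \<omega>) \<le> (\<Sum>p\<in>P. (1 / fact n) * exp (W p \<omega>))" for \<omega>
  proof -
    have "c * sample_var \<omega> = (\<Sum>p\<in>P. (1 / fact n) *\<^sub>R W p \<omega>)"
      unfolding sample_var_eq_permutation_average P_def W_def by (simp add: sum_distrib_left field_simps)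
    then show ?thesis
      by (simp only:) (rule convex_on_sum[OF finP Pne exp_convex], use cardP in auto)
  qed
  then have "expectation (\<lambda>\<omega>. exp (c * sample_var \<omega>)) \<le> expectation (\<lambda>\<omega>. \<Sum>p\<in>P. (1 / fact n) * exp (W p \<omega>))"
    by (intro integral_mono integrable_exp_sample_var) (use int_W in auto)
  also have "\<dots> = (\<Sum>p\<in>P. (1 / fact n) * expectation (\<lambda>\<omega>. exp (W p \<omega>)))"
    using int_W by (simp add: integral_sum)
  also have "\<dots> \<le> (\<Sum>p\<in>P. (1 / fact n) * exp B)"
    using expect_W by (intro sum_mono mult_left_mono) auto
  also have "\<dots> = exp B" using cardP by simp
  finally show ?thesis .
qed

lemma mgf_half_sq_diff_le:
  assumes ij: "i < n" "j < n" "i \<noteq> j" and s: "0 \<le> s" "s * (b - a)\<^sup>2 / 2 \<le> 1"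
  shows "expectation (\<lambda>\<omega>. exp (s * half_sq_diff i j \<omega>))
       \<le> exp ((s + s\<^sup>2 * ((b - a)\<^sup>2 / 2))
              * ((variance (Y i) + variance (Y j) + (expectation (Y i) - expectation (Y j))\<^sup>2) / 2))"
proof -
  have "expectation (\<lambda>\<omega>. exp (s * half_sq_diff i j \<omega>))
      \<le> exp ((s + s\<^sup>2 * ((b - a)\<^sup>2 / 2)) * expectation (half_sq_diff i j))"
    using ij s by (intro mgf_le_of_nonneg_bounded[OF half_sq_diff_measurable AE_half_sq_diff_bounded]) auto
  then show ?thesis unfolding expectation_half_sq_diff[OF ij] .
qed

lemma mgf_neg_half_sq_diff_le:
  assumes ij: "i < n" "j < n" "i \<noteq> j" and s: "0 \<le> s" "s * (b - a)\<^sup>2 / 2 \<le> 2"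
  shows "expectation (\<lambda>\<omega>. exp (- s * half_sq_diff i j \<omega>))
       \<le> exp (- (s - s\<^sup>2 * ((b - a)\<^sup>2 / 2) / 2) * ((variance (Y i) + variance (Y j)) / 2))"
proof -
  have "s\<^sup>2 * ((b - a)\<^sup>2 / 2) / 2 = s * (s * (b - a)\<^sup>2 / 2) / 2" by (simp add: power2_eq_square)
  also have "\<dots> \<le> s" using mult_left_mono[OF s(2,1)] by simp
  finally have coef: "0 \<le> s - s\<^sup>2 * ((b - a)\<^sup>2 / 2) / 2" by simp
  have "(variance (Y i) + variance (Y j)) / 2 \<le> expectation (half_sq_diff i j)"
    unfolding expectation_half_sq_diff[OF ij] by (simp add: divide_right_mono)
  then have "exp (- (s - s\<^sup>2 * ((b - a)\<^sup>2 / 2) / 2) * expectation (half_sq_diff i j))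
      \<le> exp (- (s - s\<^sup>2 * ((b - a)\<^sup>2 / 2) / 2) * ((variance (Y i) + variance (Y j)) / 2))"
    using mult_left_mono[OF _ coef] by (simp only: exp_le_cancel_iff mult_minus_left neg_le_iff_le)
  moreover have "expectation (\<lambda>\<omega>. exp (- s * half_sq_diff i j \<omega>))
      \<le> exp (- (s - s\<^sup>2 * ((b - a)\<^sup>2 / 2) / 2) * expectation (half_sq_diff i j))"
    using ij s by (intro mgf_neg_le_of_nonneg_bounded[OF half_sq_diff_measurable AE_half_sq_diff_bounded]) auto
  ultimately show ?thesis by (rule order.trans[rotated])
qed

lemma prob_sample_var_le:
  assumes l: "0 \<le> l" "l * (b - a)\<^sup>2 \<le> 4 * real m"
    and w: "\<And>p. p permutes {..<n} \<Longrightarrow>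
              real m * w \<le> (\<Sum>k<m. (variance (Y (p (2*k))) + variance (Y (p (2*k+1)))) / 2)"
  shows "prob {\<omega>\<in>space M. sample_var \<omega> \<le> T} \<le> exp (l * T - (l - l\<^sup>2 * (b - a)\<^sup>2 / (4 * real m)) * w)"
proof -
  define s where "s = l / real m"
  define \<kappa> where "\<kappa> = s - s\<^sup>2 * ((b - a)\<^sup>2 / 2) / 2"
  have mp: "0 < real m" using m_pos by simp
  have s: "0 \<le> s" "s * (b - a)\<^sup>2 / 2 \<le> 2" unfolding s_def using l mp by (auto simp: field_simps)
  have "s\<^sup>2 * ((b - a)\<^sup>2 / 2) / 2 \<le> s" using mult_left_mono[OF s(2,1)] by (simp add: power2_eq_square)
  then have \<kappa>: "0 \<le> \<kappa>" unfolding \<kappa>_def by simp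
  have mgf: "expectation (\<lambda>\<omega>. exp ((- l) * sample_var \<omega>)) \<le> exp (- \<kappa> * (real m * w))"
  proof (rule mgf_sample_var_le)
    show "expectation (\<lambda>\<omega>. exp ((- l / m) * half_sq_diff i j \<omega>)) \<le> exp (- \<kappa> * ((variance (Y i) + variance (Y j)) / 2))"
      if "i < n" "j < n" "i \<noteq> j" for i j
      using mgf_neg_half_sq_diff_le[OF that s] unfolding s_def \<kappa>_def by simp
    show "(\<Sum>k<m. - \<kappa> * ((variance (Y (p (2*k))) + variance (Y (p (2*k+1)))) / 2)) \<le> - \<kappa> * (real m * w)"
      if "p permutes {..<n}" for p
      using mult_left_mono[OF w[OF that] \<kappa>] by (simp add: sum_distrib_left sum_negf)
  qed
  have "prob {\<omega>\<in>space M. sample_var \<omega> \<le> T} \<le> expectation (\<lambda>\<omega>. exp (l * - sample_var \<omega>)) / exp (l * - T)"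
    using chernoff_prob_ge[of "\<lambda>\<omega>. - sample_var \<omega>" l "- T"] integrable_exp_sample_var[of "- l"] l by simp
  also have "\<dots> \<le> exp (- \<kappa> * (real m * w)) / exp (- l * T)"
    using mgf by (simp add: divide_right_mono)
  also have "\<dots> = exp (l * T - (l - l\<^sup>2 * (b - a)\<^sup>2 / (4 * real m)) * w)"
    unfolding \<kappa>_def s_def using mp by (simp add: exp_diff[symmetric] field_simps power2_eq_square)
  finally show ?thesis .
qed

lemma prob_sample_var_ge:
  assumes l: "0 \<le> l" "l * (b - a)\<^sup>2 \<le> 2 * real m"
    and v: "\<And>p. p permutes {..<n} \<Longrightarrow>
       (\<Sum>k<m. (variance (Y (p (2*k))) + variance (Y (p (2*k+1)))
                 + (expectation (Y (p (2*k))) - expectation (Y (p (2*k+1))))\<^sup>2) / 2) \<le> real m * v"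
  shows "prob {\<omega>\<in>space M. T \<le> sample_var \<omega>} \<le> exp (- l * T + (l + l\<^sup>2 * (b - a)\<^sup>2 / (2 * real m)) * v)"
proof -
  define s where "s = l / real m"
  define \<kappa> where "\<kappa> = s + s\<^sup>2 * ((b - a)\<^sup>2 / 2)"
  have mp: "0 < real m" using m_pos by simp
  have s: "0 \<le> s" "s * (b - a)\<^sup>2 / 2 \<le> 1" unfolding s_def using l mp by (auto simp: field_simps)
  have \<kappa>: "0 \<le> \<kappa>" using s unfolding \<kappa>_def by simp
  have mgf: "expectation (\<lambda>\<omega>. exp (l * sample_var \<omega>)) \<le> exp (\<kappa> * (real m * v))"
  proof (rule mgf_sample_var_le)
    show "expectation (\<lambda>\<omega>. exp ((l / m) * half_sq_diff i j \<omega>))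
        \<le> exp (\<kappa> * ((variance (Y i) + variance (Y j) + (expectation (Y i) - expectation (Y j))\<^sup>2) / 2))"
      if "i < n" "j < n" "i \<noteq> j" for i j
      using mgf_half_sq_diff_le[OF that s] unfolding s_def \<kappa>_def by simp
    show "(\<Sum>k<m. \<kappa> * ((variance (Y (p (2*k))) + variance (Y (p (2*k+1)))
                   + (expectation (Y (p (2*k))) - expectation (Y (p (2*k+1))))\<^sup>2) / 2)) \<le> \<kappa> * (real m * v)"
      if "p permutes {..<n}" for p
      using mult_left_mono[OF v[OF that] \<kappa>] by (simp add: sum_distrib_left)
  qed
  have "prob {\<omega>\<in>space M. T \<le> sample_var \<omega>} \<le> expectation (\<lambda>\<omega>. exp (l * sample_var \<omega>)) / exp (l * T)"
    using chernoff_prob_ge[OF _ integrable_exp_sample_var l(1)] by simp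
  also have "\<dots> \<le> exp (\<kappa> * (real m * v)) / exp (l * T)"
    using mgf by (simp add: divide_right_mono)
  also have "\<dots> = exp (- l * T + (l + l\<^sup>2 * (b - a)\<^sup>2 / (2 * real m)) * v)"
    unfolding \<kappa>_def s_def using mp by (simp add: exp_diff[symmetric] field_simps power2_eq_square)
  finally show ?thesis .
qed

lemma variance_bounds:
  assumes "r < n" shows "0 \<le> variance (Y r) \<and> variance (Y r) \<le> (b - a)\<^sup>2 / 4"
  using variance_le_quarter_range_sq[OF Y_measurable[OF assms] bounded[OF assms]]
  by (auto intro: integral_nonneg_AE)

lemma pooled_var_nonneg: "0 \<le> pooled_var"
  unfolding pooled_var_def using variance_bounds by (intro divide_nonneg_nonneg sum_nonneg) auto

lemma pooled_var_le: "pooled_var \<le> (b - a)\<^sup>2 / 4"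
proof -
  have "(\<Sum>r<n. variance (Y r)) \<le> real n * ((b - a)\<^sup>2 / 4)"
    using sum_mono[of "{..<n}" "\<lambda>r. variance (Y r)" "\<lambda>_. (b - a)\<^sup>2 / 4"] variance_bounds by simp
  then show ?thesis unfolding pooled_var_def using two_le_n by (simp add: field_simps)
qed

text \<open>At most one index (the one left over when \<open>n\<close> is odd) is missed by the pairs.\<close>

lemma sum_pairs_bounds:
  assumes p: "p permutes {..<n}" and f: "\<And>r. r < n \<Longrightarrow> 0 \<le> f r \<and> f r \<le> C"
  shows "(\<Sum>r<2*m. f (p r)) \<le> (\<Sum>r<n. f r)"
    and "(\<Sum>r<n. f r) \<le> (\<Sum>r<2*m. f (p r)) + (real n - 2 * real m) * C"
proof -
  have fp: "r < n \<Longrightarrow> 0 \<le> f (p r) \<and> f (p r) \<le> C" for r using f permutes_in_image[OF p] by auto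
  have "(\<Sum>r<n. f r) = (\<Sum>r<n. f (p r))"
    using sum.reindex_bij_betw[OF permutes_imp_bij[OF p], of f] by simp
  also have "\<dots> = (\<Sum>r<2*m. f (p r)) + (\<Sum>r\<in>{2*m..<n}. f (p r))"
    using sum.atLeastLessThan_concat[of 0 "2*m" n "\<lambda>r. f (p r)"] by (simp add: atLeast0LessThan)
  finally have S: "(\<Sum>r<n. f r) = (\<Sum>r<2*m. f (p r)) + (\<Sum>r\<in>{2*m..<n}. f (p r))" .
  have "(\<Sum>r\<in>{2*m..<n}. f (p r)) \<le> (\<Sum>r\<in>{2*m..<n}. C)" using fp by (intro sum_mono) auto
  then have up: "(\<Sum>r\<in>{2*m..<n}. f (p r)) \<le> (real n - 2 * real m) * C" by (simp add: of_nat_diff)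
  have "0 \<le> (\<Sum>r\<in>{2*m..<n}. f (p r))" using fp by (intro sum_nonneg) auto
  then show "(\<Sum>r<2*m. f (p r)) \<le> (\<Sum>r<n. f r)" using S by linarith
  show "(\<Sum>r<n. f r) \<le> (\<Sum>r<2*m. f (p r)) + (real n - 2 * real m) * C" using S up by linarith
qed

lemma sum_pair_variances:
  "(\<Sum>k<m. (variance (Y (p (2*k))) + variance (Y (p (2*k+1)))) / 2) = (\<Sum>r<2*m. variance (Y (p r))) / 2"
  using sum_consecutive_pairs[of "\<lambda>r. variance (Y (p r))" m] by (simp add: sum_divide_distrib[symmetric])

lemma sum_pair_variances_ge:
  assumes p: "p permutes {..<n}"
  shows "real m * (pooled_var - (b - a)\<^sup>2 / (8 * real m))
       \<le> (\<Sum>k<m. (variance (Y (p (2*k))) + variance (Y (p (2*k+1)))) / 2)"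
proof -
  have "real n - 2 * real m \<le> 1" "0 \<le> real n - 2 * real m" by linarith+
  then have "(real n - 2 * real m) * ((b - a)\<^sup>2 / 4) \<le> (b - a)\<^sup>2 / 4"
    by (intro mult_left_le_one_le) simp_all
  moreover have "real n * pooled_var \<le> (\<Sum>r<2*m. variance (Y (p r))) + (real n - 2 * real m) * ((b - a)\<^sup>2 / 4)"
    using sum_pairs_bounds(2)[OF p variance_bounds] two_le_n unfolding pooled_var_def by simp
  moreover have "2 * real m * pooled_var \<le> real n * pooled_var"
    using pooled_var_nonneg by (intro mult_right_mono) linarith+
  moreover have "real m * (pooled_var - (b - a)\<^sup>2 / (8 * real m)) = real m * pooled_var - (b - a)\<^sup>2 / 8"
    using m_pos by (simp add: field_simps)
  ultimately show ?thesis unfolding sum_pair_variances by linarith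
qed

lemma sum_pair_moments_le:
  assumes p: "p permutes {..<n}"
    and D: "\<And>r s. r < n \<Longrightarrow> s < n \<Longrightarrow> \<bar>expectation (Y r) - expectation (Y s)\<bar> \<le> 2 * D"
  shows "(\<Sum>k<m. (variance (Y (p (2*k))) + variance (Y (p (2*k+1)))
                  + (expectation (Y (p (2*k))) - expectation (Y (p (2*k+1))))\<^sup>2) / 2)
     \<le> real m * (pooled_var + (b - a)\<^sup>2 / (8 * real m) + 2 * D\<^sup>2)"
proof -
  have "real n - 2 * real m \<le> 1" "0 \<le> real n - 2 * real m" by linarith+
  then have "(real n - 2 * real m) * pooled_var \<le> pooled_var"
    using pooled_var_nonneg by (intro mult_left_le_one_le)
  moreover have "(\<Sum>r<2*m. variance (Y (p r))) \<le> real n * pooled_var"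
    using sum_pairs_bounds(1)[OF p variance_bounds] two_le_n unfolding pooled_var_def by simp
  ultimately have "(\<Sum>r<2*m. variance (Y (p r))) \<le> 2 * real m * pooled_var + (b - a)\<^sup>2 / 4"
    using pooled_var_le by (simp add: algebra_simps)
  then have var: "(\<Sum>k<m. (variance (Y (p (2*k))) + variance (Y (p (2*k+1)))) / 2)
      \<le> real m * pooled_var + (b - a)\<^sup>2 / 8"
    unfolding sum_pair_variances by simp
  have "(expectation (Y (p (2*k))) - expectation (Y (p (2*k+1))))\<^sup>2 / 2 \<le> 2 * D\<^sup>2" if "k < m" for k
  proof -
    have "\<bar>expectation (Y (p (2*k))) - expectation (Y (p (2*k+1)))\<bar> \<le> \<bar>2 * D\<bar>"
      using D pair_indices[OF p that] by fastforce
    then show ?thesis by (simp add: abs_le_square_iff power_mult_distrib)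
  qed
  then have "(\<Sum>k<m. (expectation (Y (p (2*k))) - expectation (Y (p (2*k+1))))\<^sup>2 / 2) \<le> real m * (2 * D\<^sup>2)"
    using sum_mono[of "{..<m}" "\<lambda>k. (expectation (Y (p (2*k))) - expectation (Y (p (2*k+1))))\<^sup>2 / 2" "\<lambda>_. 2 * D\<^sup>2"]
    by simp
  moreover have "real m * (pooled_var + (b - a)\<^sup>2 / (8 * real m) + 2 * D\<^sup>2)
      = real m * pooled_var + (b - a)\<^sup>2 / 8 + real m * (2 * D\<^sup>2)"
    using m_pos by (simp add: field_simps)
  ultimately show ?thesis
    using var by (simp add: sum.distrib add_divide_distrib)
qed

lemma prob_sqrt_sample_var_lt:
  assumes ab: "a < b" and s: "0 < s" and F: "L * (b - a)\<^sup>2 \<le> real m * s\<^sup>2"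
    and LL: "L' + 1/4 \<le> L" and L': "0 \<le> L'"
  shows "prob {\<omega>\<in>space M. sqrt (sample_var \<omega>) < sqrt pooled_var - s} \<le> exp (- L')"
proof (cases "sqrt pooled_var \<le> s")
  case True
  have "\<not> sqrt (sample_var \<omega>) < sqrt pooled_var - s" for \<omega>
    using True real_sqrt_ge_zero[OF sample_var_nonneg, of \<omega>] by linarith
  then show ?thesis by simp
next
  case False
  define \<sigma> where "\<sigma> = sqrt pooled_var"
  have mp: "0 < real m" using m_pos by simp
  obtain l where l: "0 \<le> l" "l * (b - a)\<^sup>2 \<le> 4 * real m"
    "l * (\<sigma> - s)\<^sup>2 - (l - l\<^sup>2 * (b - a)\<^sup>2 / (4 * real m)) * (\<sigma>\<^sup>2 - (b - a)\<^sup>2 / (8 * real m)) \<le> - L'"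
    using lower_exponent_choice[OF mp _ _ s F LL L', of \<sigma>] False ab unfolding \<sigma>_def by force
  have "sample_var \<omega> \<le> (\<sigma> - s)\<^sup>2" if "sqrt (sample_var \<omega>) < \<sigma> - s" for \<omega>
    using that sample_var_nonneg[of \<omega>] real_sqrt_ge_zero[OF sample_var_nonneg, of \<omega>]
    by (metis less_imp_le power_mono real_sqrt_pow2)
  then have "prob {\<omega>\<in>space M. sqrt (sample_var \<omega>) < \<sigma> - s} \<le> prob {\<omega>\<in>space M. sample_var \<omega> \<le> (\<sigma> - s)\<^sup>2}"
    by (intro finite_measure_mono) auto
  also have "\<dots> \<le> exp (l * (\<sigma> - s)\<^sup>2 - (l - l\<^sup>2 * (b - a)\<^sup>2 / (4 * real m)) * (pooled_var - (b - a)\<^sup>2 / (8 * real m)))"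
    by (rule prob_sample_var_le[OF l(1,2) sum_pair_variances_ge])
  also have "\<dots> \<le> exp (- L')"
    using l(3) pooled_var_nonneg unfolding \<sigma>_def by simp
  finally show ?thesis unfolding \<sigma>_def .
qed

lemma prob_sqrt_sample_var_gt:
  assumes ab: "a < b"
    and D: "\<And>r s. r < n \<Longrightarrow> s < n \<Longrightarrow> \<bar>expectation (Y r) - expectation (Y s)\<bar> \<le> 2 * D"
    and s: "0 < s" and F: "L * (b - a)\<^sup>2 \<le> real m * s\<^sup>2"
    and LL: "L' + 1/2 \<le> L" and L': "0 \<le> L'"
  shows "prob {\<omega>\<in>space M. sqrt pooled_var + sqrt 2 * D + s < sqrt (sample_var \<omega>)} \<le> exp (- L')"
proof -
  define R where "R = sqrt pooled_var + sqrt 2 * D"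
  define v where "v = pooled_var + (b - a)\<^sup>2 / (8 * real m) + 2 * D\<^sup>2"
  have mp: "0 < real m" using m_pos by simp
  have D0: "0 \<le> D" using D[of 0 0] two_le_n by auto
  have R0: "0 \<le> R" unfolding R_def using D0 pooled_var_nonneg by simp
  have "v \<le> R\<^sup>2 + (b - a)\<^sup>2 / (8 * real m)"
    unfolding v_def R_def using pooled_var_nonneg D0 by (simp add: power2_eq_square algebra_simps)
  then obtain l where l: "0 \<le> l" "l * (b - a)\<^sup>2 \<le> 2 * real m"
    "- l * (R + s)\<^sup>2 + (l + l\<^sup>2 * (b - a)\<^sup>2 / (2 * real m)) * v \<le> - L'"
    using upper_exponent_choice[OF mp _ R0 s F LL L'] ab by auto
  have "(R + s)\<^sup>2 \<le> sample_var \<omega>" if "R + s < sqrt (sample_var \<omega>)" for \<omega>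
    using that R0 s sample_var_nonneg[of \<omega>] by (metis less_imp_le power_mono real_sqrt_pow2 add_nonneg_nonneg)
  then have "prob {\<omega>\<in>space M. R + s < sqrt (sample_var \<omega>)} \<le> prob {\<omega>\<in>space M. (R + s)\<^sup>2 \<le> sample_var \<omega>}"
    by (intro finite_measure_mono) auto
  also have "\<dots> \<le> exp (- l * (R + s)\<^sup>2 + (l + l\<^sup>2 * (b - a)\<^sup>2 / (2 * real m)) * v)"
    unfolding v_def by (rule prob_sample_var_ge[OF l(1,2) sum_pair_moments_le[OF _ D]])
  also have "\<dots> \<le> exp (- L')" using l(3) by simp
  finally show ?thesis unfolding R_def .
qed

lemma conf_radius_le_emp_conf_radius:
  assumes ab: "a < b" and \<delta>: "0 < \<delta>" "\<delta> < 1"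
  shows "1 - \<delta> \<le> prob {\<omega>\<in>space M. conf_radius \<delta> \<le> emp_conf_radius \<delta> \<omega>}"
proof (rule prob_ge_1_minus_of_prob_not)
  show "{\<omega>\<in>space M. conf_radius \<delta> \<le> emp_conf_radius \<delta> \<omega>} \<in> events"
    unfolding emp_conf_radius_def by measurable
  define L where "L = ln (2 / \<delta>)"
  define c where "c = sqrt (2 * L / real n)"
  define A1 where "A1 = 2 * (b - a) * L / (3 * real n)"
  define A2 where "A2 = 8 * (b - a) * L / (3 * (real n - 1))"
  define s where "s = (A2 - A1) / c"
  have L: "0 < L" and LL: "ln (1 / \<delta>) + 1/4 \<le> L" and "0 \<le> ln (1 / \<delta>)"
    using ln_two_div_ge[OF \<delta>(1)] \<delta> unfolding L_def by auto
  have n: "2 \<le> real n" "real n - 1 \<le> 2 * real m" using two_le_n by linarith+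
  note gap = bernstein_gap[OF n _ L lower_gap_ge[OF n(1) _ L], of "b - a", folded A1_def A2_def c_def s_def]
  have c: "0 < c" unfolding c_def using L n by simp
  have conf: "conf_radius \<delta> = sqrt pooled_var * c + A1"
    unfolding conf_radius_def c_def A1_def L_def ..
  have emp: "emp_conf_radius \<delta> \<omega> = sqrt (sample_var \<omega>) * c + A2" for \<omega>
    unfolding emp_conf_radius_def c_def A2_def L_def ..
  have sc: "s * c = A2 - A1" unfolding s_def using c by simp
  have "sqrt (sample_var \<omega>) < sqrt pooled_var - s" if "\<not> conf_radius \<delta> \<le> emp_conf_radius \<delta> \<omega>" for \<omega>
  proof -
    have "sqrt (sample_var \<omega>) * c < (sqrt pooled_var - s) * c"
      using that sc unfolding conf emp left_diff_distrib by linarith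
    then show ?thesis using c by simp
  qed
  then have "prob {\<omega>\<in>space M. \<not> conf_radius \<delta> \<le> emp_conf_radius \<delta> \<omega>}
      \<le> prob {\<omega>\<in>space M. sqrt (sample_var \<omega>) < sqrt pooled_var - s}"
    by (intro finite_measure_mono) auto
  also have "\<dots> \<le> exp (- ln (1 / \<delta>))"
    using prob_sqrt_sample_var_lt[OF ab _ _ LL] gap ab \<open>0 \<le> ln (1 / \<delta>)\<close> by simp
  also have "\<dots> = \<delta>" using \<delta> by (simp add: ln_div)
  finally show "prob {\<omega>\<in>space M. \<not> conf_radius \<delta> \<le> emp_conf_radius \<delta> \<omega>} \<le> \<delta>" .
qed

lemma emp_conf_radius_le_conf_radius:
  assumes ab: "a < b" and \<delta>: "0 < \<delta>" "\<delta> < 1"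
    and D: "\<And>r s. r < n \<Longrightarrow> s < n \<Longrightarrow> \<bar>expectation (Y r) - expectation (Y s)\<bar> \<le> 2 * D"
  shows "1 - \<delta> \<le> prob {\<omega>\<in>space M. emp_conf_radius \<delta> \<omega> \<le> conf_radius \<delta>
            + (sqrt (4 * ln (2 / \<delta>) / real n) * D + 13 * (b - a) * ln (2 / \<delta>) / (3 * (real n - 1)))}"
    (is "_ \<le> prob {\<omega>\<in>space M. emp_conf_radius \<delta> \<omega> \<le> conf_radius \<delta> + ?xi}")
proof (rule prob_ge_1_minus_of_prob_not)
  show "{\<omega>\<in>space M. emp_conf_radius \<delta> \<omega> \<le> conf_radius \<delta> + ?xi} \<in> events"
    unfolding emp_conf_radius_def by measurable
  define L where "L = ln (2 / \<delta>)"
  define c where "c = sqrt (2 * L / real n)"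
  define A1 where "A1 = 2 * (b - a) * L / (3 * real n)"
  define A2 where "A2 = 8 * (b - a) * L / (3 * (real n - 1))"
  define A3 where "A3 = 13 * (b - a) * L / (3 * (real n - 1))"
  define s where "s = (A1 + (A3 - A2)) / c"
  have L: "0 < L" and LL: "ln (1 / \<delta>) + 1/2 \<le> L" and "0 \<le> ln (1 / \<delta>)"
    using ln_two_div_ge[OF \<delta>(1)] \<delta> unfolding L_def by auto
  have n: "2 \<le> real n" "real n - 1 \<le> 2 * real m" using two_le_n by linarith+
  note gap = bernstein_gap[OF n _ L upper_gap_ge[OF n(1) _ L], of "b - a", folded A1_def A2_def A3_def c_def s_def]
  have c: "0 < c" unfolding c_def using L n by simp
  have conf: "conf_radius \<delta> = sqrt pooled_var * c + A1"
    unfolding conf_radius_def c_def A1_def L_def ..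
  have emp: "emp_conf_radius \<delta> \<omega> = sqrt (sample_var \<omega>) * c + A2" for \<omega>
    unfolding emp_conf_radius_def c_def A2_def L_def ..
  have "sqrt (4 * L / real n) = sqrt 2 * c"
    unfolding c_def by (simp add: real_sqrt_mult[symmetric])
  then have xi: "?xi = sqrt 2 * c * D + A3" unfolding A3_def L_def[symmetric] by simp
  have "s * c = A1 + (A3 - A2)" unfolding s_def using c by simp
  then have Rc: "(sqrt pooled_var + sqrt 2 * D + s) * c = sqrt pooled_var * c + sqrt 2 * c * D + (A1 + (A3 - A2))"
    by (simp add: algebra_simps)
  have "sqrt pooled_var + sqrt 2 * D + s < sqrt (sample_var \<omega>)"
    if "\<not> emp_conf_radius \<delta> \<omega> \<le> conf_radius \<delta> + ?xi" for \<omega>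
  proof -
    have "(sqrt pooled_var + sqrt 2 * D + s) * c < sqrt (sample_var \<omega>) * c"
      using that Rc unfolding conf emp xi by linarith
    then show ?thesis using c by simp
  qed
  then have "prob {\<omega>\<in>space M. \<not> emp_conf_radius \<delta> \<omega> \<le> conf_radius \<delta> + ?xi}
      \<le> prob {\<omega>\<in>space M. sqrt pooled_var + sqrt 2 * D + s < sqrt (sample_var \<omega>)}"
    by (intro finite_measure_mono) auto
  also have "\<dots> \<le> exp (- ln (1 / \<delta>))"
    using prob_sqrt_sample_var_gt[OF ab D _ _ LL] gap ab \<open>0 \<le> ln (1 / \<delta>)\<close> by simp
  also have "\<dots> = \<delta>" using \<delta> by (simp add: ln_div)
  finally show "prob {\<omega>\<in>space M. \<not> emp_conf_radius \<delta> \<omega> \<le> conf_radius \<delta> + ?xi} \<le> \<delta>" .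
qed

end

section \<open>The sliding window\<close>

lemma sum_Sigma_enumeration:
  assumes e: "bij_betw e {..<n} (SIGMA j:W. A j)" and "finite W" "\<And>j. finite (A j)"
  shows "(\<Sum>j\<in>W. \<Sum>i\<in>A j. f j i) = (\<Sum>r<n. f (fst (e r)) (snd (e r)))"
  using assms by (simp add: sum.Sigma split_beta sum.reindex_bij_betw[OF e, symmetric])

lemma window_enumeration:
  obtains e where "bij_betw e {..<Btk B t k} (SIGMA j:{t-k+1..t}. {1..B j})"
    and "\<And>r. r < Btk B t k \<Longrightarrow> fst (e r) \<in> {t-k+1..t} \<and> snd (e r) \<in> {1..B (fst (e r))}"
proof -
  have "card (SIGMA j:{t-k+1..t}. {1..B j}) = Btk B t k" unfolding Btk_def by (simp add: card_SigmaI)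
  then obtain e where e: "bij_betw e {..<Btk B t k} (SIGMA j:{t-k+1..t}. {1..B j})"
    using ex_bij_betw_nat_finite[of "SIGMA j:{t-k+1..t}. {1..B j}"] by (auto simp: atLeast0LessThan)
  moreover have "fst (e r) \<in> {t-k+1..t} \<and> snd (e r) \<in> {1..B (fst (e r))}" if "r < Btk B t k" for r
  proof -
    have "e r \<in> (SIGMA j:{t-k+1..t}. {1..B j})" using bij_betwE[OF e] that by blast
    then show ?thesis by (cases "e r") auto
  qed
  ultimately show ?thesis by (rule that)
qed

lemma window_bounded_indep_sample:
  fixes P :: "'a measure" and Q :: "nat \<Rightarrow> real measure" and u :: "nat \<Rightarrow> nat \<Rightarrow> 'a \<Rightarrow> real"
  assumes P: "prob_space P"
    and Q: "\<And>j. j \<in> {1..t} \<Longrightarrow> prob_space (Q j) \<and> sets (Q j) = sets borel \<and> emeasure (Q j) {a..b} = 1"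
    and meas: "\<And>j i. j \<in> {1..t} \<Longrightarrow> i \<in> {1..B j} \<Longrightarrow> u j i \<in> borel_measurable P"
    and distr: "\<And>j i. j \<in> {1..t} \<Longrightarrow> i \<in> {1..B j} \<Longrightarrow> distr P borel (u j i) = Q j"
    and indep: "prob_space.indep_vars P (\<lambda>_. borel) (\<lambda>(j, i). u j i) (SIGMA j:{1..t}. {1..B j})"
    and n2: "2 \<le> Btk B t k"
    and e: "bij_betw e {..<Btk B t k} (SIGMA j:{t-k+1..t}. {1..B j})"
    and e_in: "\<And>r. r < Btk B t k \<Longrightarrow> fst (e r) \<in> {t-k+1..t} \<and> snd (e r) \<in> {1..B (fst (e r))}"
  shows "bounded_indep_sample P (Btk B t k) (\<lambda>r. u (fst (e r)) (snd (e r))) a b"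
proof -
  interpret P: prob_space P by (rule P)
  have sub: "(SIGMA j:{t-k+1..t}. {1..B j}) \<subseteq> (SIGMA j:{1..t}. {1..B j})" by auto
  show ?thesis
  proof
    show "P.indep_vars (\<lambda>_. borel) (\<lambda>r. u (fst (e r)) (snd (e r))) {..<Btk B t k}"
      using P.indep_vars_reindex_bij[OF P.indep_vars_subset[OF indep sub] e] by (simp add: split_beta)
    show "AE \<omega> in P. a \<le> u (fst (e r)) (snd (e r)) \<omega> \<and> u (fst (e r)) (snd (e r)) \<omega> \<le> b"
      if "r < Btk B t k" for r
    proof -
      have ji: "fst (e r) \<in> {1..t}" "snd (e r) \<in> {1..B (fst (e r))}" using e_in[OF that] by auto
      then show ?thesis using P.AE_bounds_of_distr[OF meas[OF ji] distr[OF ji]] Q[OF ji(1)] by blast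
    qed
  qed (rule n2)
qed

lemma window_concentration:
  fixes P :: "'a measure" and Q :: "nat \<Rightarrow> real measure" and u :: "nat \<Rightarrow> nat \<Rightarrow> 'a \<Rightarrow> real"
  assumes P: "prob_space P" and ab: "a < b"
    and Q: "\<And>j. j \<in> {1..t} \<Longrightarrow> prob_space (Q j) \<and> sets (Q j) = sets borel \<and> emeasure (Q j) {a..b} = 1"
    and meas: "\<And>j i. j \<in> {1..t} \<Longrightarrow> i \<in> {1..B j} \<Longrightarrow> u j i \<in> borel_measurable P"
    and distr: "\<And>j i. j \<in> {1..t} \<Longrightarrow> i \<in> {1..B j} \<Longrightarrow> distr P borel (u j i) = Q j"
    and indep: "prob_space.indep_vars P (\<lambda>_. borel) (\<lambda>(j, i). u j i) (SIGMA j:{1..t}. {1..B j})"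
    and n2: "2 \<le> Btk B t k" and \<delta>: "0 < \<delta>" "\<delta> < 1"
  shows "measure P {\<omega> \<in> space P. psi (b - a) Q B t k \<delta> \<le> psihat (b - a) u B t k \<delta> \<omega>} \<ge> 1 - \<delta>
       \<and> measure P {\<omega> \<in> space P. psihat (b - a) u B t k \<delta> \<omega> \<le> psi (b - a) Q B t k \<delta> + xi (b - a) Q B t k \<delta>} \<ge> 1 - \<delta>"
proof -
  define W where "W = {t-k+1..t}"
  define n where "n = Btk B t k"
  obtain e where e: "bij_betw e {..<n} (SIGMA j:W. {1..B j})"
    and e_in: "\<And>r. r < n \<Longrightarrow> fst (e r) \<in> W \<and> snd (e r) \<in> {1..B (fst (e r))}"
    using window_enumeration unfolding W_def n_def by metis
  define Y where "Y r = u (fst (e r)) (snd (e r))" for r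
  have "bounded_indep_sample P n Y a b"
    using P Q meas distr indep n2 e e_in unfolding Y_def W_def n_def by (rule window_bounded_indep_sample)
  then interpret S: bounded_indep_sample P n Y a b .
  have "dmean (Q (fst (e r))) = S.expectation (Y r)" "dvar (Q (fst (e r))) = S.variance (Y r)"
    if "r < n" for r
    using S.dmean_dvar_of_distr[OF meas distr] e_in[OF that] unfolding Y_def W_def by auto
  note mean_var = this
  have "finite W" unfolding W_def by simp
  note reindex = sum_Sigma_enumeration[OF e this finite_atLeastAtMost, unfolded W_def]
  have "sigma2tk Q B t k = S.pooled_var"
    using reindex[of "\<lambda>j i. dvar (Q j)"] mean_var(2) unfolding sigma2tk_def S.pooled_var_def n_def[symmetric]
    by simp
  then have psi: "psi (b - a) Q B t k \<delta> = S.conf_radius \<delta>"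
    using n2 unfolding psi_def S.conf_radius_def n_def[symmetric] by simp
  have "muhat u B t k \<omega> = (\<Sum>r<n. Y r \<omega>) / real n" for \<omega>
    unfolding muhat_def n_def[symmetric] reindex Y_def ..
  then have "vhat u B t k \<omega> = sqrt (S.sample_var \<omega>)" for \<omega>
    unfolding vhat_def S.sample_var_eq_centered n_def[symmetric] reindex Y_def by simp
  then have psihat: "psihat (b - a) u B t k \<delta> \<omega> = S.emp_conf_radius \<delta> \<omega>" for \<omega>
    using n2 unfolding psihat_def S.emp_conf_radius_def n_def[symmetric] by simp
  define D where "D = Max ((\<lambda>j. \<bar>dmean (Q j) - dmean (Q t)\<bar>) ` W)"
  have mean_dev: "\<bar>S.expectation (Y r) - dmean (Q t)\<bar> \<le> D" if "r < n" for r
    unfolding D_def mean_var(1)[OF that, symmetric] using e_in[OF that] unfolding W_def by (intro Max_ge) auto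
  have D: "\<bar>S.expectation (Y r) - S.expectation (Y s)\<bar> \<le> 2 * D" if "r < n" "s < n" for r s
    using mean_dev[OF that(1)] mean_dev[OF that(2)] by (simp add: abs_le_iff)
  have xi: "xi (b - a) Q B t k \<delta>
      = sqrt (4 * ln (2 / \<delta>) / real n) * D + 13 * (b - a) * ln (2 / \<delta>) / (3 * (real n - 1))"
    using n2 unfolding xi_def D_def W_def n_def by simp
  show ?thesis
    unfolding psi psihat xi
    using S.conf_radius_le_emp_conf_radius[OF ab \<delta>] S.emp_conf_radius_le_conf_radius[OF ab \<delta> D] by simp
qed

theorem mainTheorem2:
  fixes P :: "'a measure" and a b :: real and t k :: nat and \<delta> :: real
    and Q :: "nat \<Rightarrow> real measure" and B :: "nat \<Rightarrow> nat"
    and u :: "nat \<Rightarrow> nat \<Rightarrow> 'a \<Rightarrow> real"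
  assumes P: "prob_space P"
    and ab: "a < b"
    and t: "1 \<le> t"
    and Q: "\<And>j. j \<in> {1..t} \<Longrightarrow> prob_space (Q j) \<and> sets (Q j) = sets borel \<and> emeasure (Q j) {a..b} = 1"
    and Bpos: "\<And>j. j \<in> {1..t} \<Longrightarrow> 1 \<le> B j"
    and meas: "\<And>j i. j \<in> {1..t} \<Longrightarrow> i \<in> {1..B j} \<Longrightarrow> u j i \<in> borel_measurable P"
    and distr: "\<And>j i. j \<in> {1..t} \<Longrightarrow> i \<in> {1..B j} \<Longrightarrow> distr P borel (u j i) = Q j"
    and indep: "prob_space.indep_vars P (\<lambda>_. borel) (\<lambda>(j, i). u j i) (SIGMA j:{1..t}. {1..B j})"
    and k: "k \<in> {1..t}"
    and \<delta>: "0 < \<delta>" "\<delta> < 1"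
  shows "measure P {\<omega> \<in> space P. psi (b - a) Q B t k \<delta> \<le> psihat (b - a) u B t k \<delta> \<omega>} \<ge> 1 - \<delta>
       \<and> measure P {\<omega> \<in> space P. psihat (b - a) u B t k \<delta> \<omega> \<le> psi (b - a) Q B t k \<delta> + xi (b - a) Q B t k \<delta>} \<ge> 1 - \<delta>"
proof (cases "Btk B t k = 1")
  case True
  then show ?thesis
    using \<delta> prob_space.prob_space[OF P] by (simp add: psi_def psihat_def xi_def)
next
  case False
  have "B t \<le> Btk B t k" unfolding Btk_def using k by (intro member_le_sum) auto
  moreover have "1 \<le> B t" using Bpos t by simp
  ultimately have "2 \<le> Btk B t k" using False by linarith
  then show ?thesis using window_concentration[OF P ab Q meas distr indep _ \<delta>] by blast
qed

end
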